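(* Let $m\ge2$, $D=\mathrm{diag}(d_1,\dots,d_m)$ with $d_1<\dots<d_m$, $\beta_1,\beta_2$ nonzero reals, $\mathbf v_1,\mathbf v_2\in\mathbb R^m$ (entries $v_{1q},v_{2q}$), with $\{1,\dots,m\}$ partitioned into $J_1,J_2,J_3$ such that $\mathbf v_1$ vanishes on $J_3$ and $\mathbf v_2$ vanishes on $J_1$; let $M=D+\beta_1\mathbf v_1\mathbf v_1^T+\beta_2\mathbf v_2\mathbf v_2^T$ and assume no $d_i$ is an eigenvalue of $M$. Let $j\in\{1,\dots,m-1\}$, $k\in\{1,\dots,m-j\}$. If $g_j^+g_{j+k}^-<0$, then $M$ has exactly $k$ eigenvalues (with multiplicity) in $I_{j,j+k}$. If $g_j^+g_{j+k}^->0$, then $M$ has either $k-1$ or $k+1$ eigenvalues (with multiplicity) in $I_{j,j+k}$. In particular, for $k=1$: $(d_j,d_{j+1})$ contains exactly one eigenvalue if $g_j^+g_{j+1}^-<0$, and zero or two eigenvalues if $g_j^+g_{j+1}^->0$.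
   Context: $I_{j,j+k}:=(d_j,d_{j+k})\setminus\{d_{j+1},\dots,d_{j+k-1}\}$. For each $i$, $g_i^+:=-\beta_1\beta_2\sum_{q\neq i}\frac{(v_{1q}v_{2i}-v_{1i}v_{2q})^2}{d_q-d_i}-\beta_1v_{1i}^2-\beta_2v_{2i}^2$ and $g_i^-:=-g_i^+$. (These are the coefficients of $1/\epsilon$ in the secular function $f(\lambda)=\beta_1\beta_2\sum_{q<r}\frac{(v_{1q}v_{2r}-v_{1r}v_{2q})^2}{(\lambda-d_q)(\lambda-d_r)}-\sum_q\frac{\beta_1v_{1q}^2+\beta_2v_{2q}^2}{\lambda-d_q}+1$ at $\lambda=d_i+\epsilon$ and $\lambda=d_i-\epsilon$ respectively, so they give the signs of $f(d_i^+)$ and $f(d_i^-)$.) *)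

theory Defs
  imports Complex_Main "Jordan_Normal_Form.Char_Poly"
begin

text \<open>Indices are 0-based: the paper's index i in {1..m} corresponds to i-1 in {0..<m}.\<close>

definition rank2_mod :: "nat \<Rightarrow> (nat \<Rightarrow> real) \<Rightarrow> real \<Rightarrow> real \<Rightarrow> (nat \<Rightarrow> real) \<Rightarrow> (nat \<Rightarrow> real) \<Rightarrow> real mat" where
  "rank2_mod m d \<beta>1 \<beta>2 v1 v2 = mat m m (\<lambda>(p, q).
      (if p = q then d p else 0) + \<beta>1 * v1 p * v1 q + \<beta>2 * v2 p * v2 q)"

definition g_plus :: "nat \<Rightarrow> (nat \<Rightarrow> real) \<Rightarrow> real \<Rightarrow> real \<Rightarrow> (nat \<Rightarrow> real) \<Rightarrow> (nat \<Rightarrow> real) \<Rightarrow> nat \<Rightarrow> real" where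
  "g_plus m d \<beta>1 \<beta>2 v1 v2 i =
     - \<beta>1 * \<beta>2 * (\<Sum>q\<in>{..<m} - {i}. (v1 q * v2 i - v1 i * v2 q)^2 / (d q - d i))
     - \<beta>1 * (v1 i)^2 - \<beta>2 * (v2 i)^2"

definition g_minus :: "nat \<Rightarrow> (nat \<Rightarrow> real) \<Rightarrow> real \<Rightarrow> real \<Rightarrow> (nat \<Rightarrow> real) \<Rightarrow> (nat \<Rightarrow> real) \<Rightarrow> nat \<Rightarrow> real" where
  "g_minus m d \<beta>1 \<beta>2 v1 v2 i = - g_plus m d \<beta>1 \<beta>2 v1 v2 i"

definition I_int :: "(nat \<Rightarrow> real) \<Rightarrow> nat \<Rightarrow> nat \<Rightarrow> real set" where
  "I_int d j k = {x. d j < x \<and> x < d (j + k) \<and> (\<forall>i. j < i \<and> i < j + k \<longrightarrow> x \<noteq> d i)}"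

definition eig_count :: "real mat \<Rightarrow> real set \<Rightarrow> nat" where
  "eig_count A S = (\<Sum>x\<in>{x \<in> S. poly (char_poly A) x = 0}. order x (char_poly A))"

end

theory Submission
  imports Defs
begin

hide_const (open) Module.module.smult

definition root_count :: "real poly \<Rightarrow> real set \<Rightarrow> nat" where
  "root_count F A = (\<Sum>x | poly F x = 0 \<and> x \<in> A. order x F)"

lemma finite_roots_in: "(F :: real poly) \<noteq> 0 \<Longrightarrow> finite {x. poly F x = 0 \<and> x \<in> A}"
  using poly_roots_finite[of F] by (rule rev_finite_subset) auto

lemma root_count_union:
  assumes "F \<noteq> 0" "A \<inter> B = {}"
  shows "root_count F (A \<union> B) = root_count F A + root_count F B"
proof -
  have "{x. poly F x = 0 \<and> x \<in> A \<union> B} = {x. poly F x = 0 \<and> x \<in> A} \<union> {x. poly F x = 0 \<and> x \<in> B}"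
    by auto
  then show ?thesis
    unfolding root_count_def using assms finite_roots_in[OF assms(1)]
    by (simp add: sum.union_disjoint disjoint_iff)
qed

lemma root_count_mono: "F \<noteq> 0 \<Longrightarrow> A \<subseteq> B \<Longrightarrow> root_count F A \<le> root_count F B"
  unfolding root_count_def by (rule sum_mono2[OF finite_roots_in]) auto

lemma root_count_le_degree: "F \<noteq> 0 \<Longrightarrow> root_count F A \<le> degree F"
  using root_count_mono[of F A UNIV] sum_order_le_degree[of F] by (simp add: root_count_def)

lemma root_count_pos: "F \<noteq> 0 \<Longrightarrow> poly F x = 0 \<Longrightarrow> x \<in> A \<Longrightarrow> 0 < root_count F A"
  unfolding root_count_def using finite_roots_in[of F A]
  by (subst sum_pos2[of _ x]) (auto simp: order_gt_0_iff)

lemma root_count_mult: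
  assumes "F \<noteq> 0" "G \<noteq> 0"
  shows "root_count (F * G) A = root_count F A + root_count G A"
proof -
  let ?R = "{x. poly (F * G) x = 0 \<and> x \<in> A}"
  have R: "finite ?R" using finite_roots_in[of "F * G"] assms by simp
  have "root_count H A = (\<Sum>x\<in>?R. order x H)" if "H \<in> {F, G}" for H
    unfolding root_count_def
    by (rule sum.mono_neutral_left[OF R]) (use assms that in \<open>auto simp: order_root\<close>)
  then show ?thesis
    unfolding root_count_def using assms by (simp add: order_mult sum.distrib)
qed

lemma root_count_linear: "root_count [:-c, 1:] A = (if c \<in> A then 1 else 0)"
proof -
  have "{x. poly [:-c, 1:] x = 0 \<and> x \<in> A} = (if c \<in> A then {c} else {})" by auto
  then show ?thesis unfolding root_count_def using order_power_n_n[of c 1] by simp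
qed

lemma root_count_parity:
  assumes "F \<noteq> 0" "a < b" "poly F a \<noteq> 0" "poly F b \<noteq> 0"
  shows "even (root_count F {a<..<b}) \<longleftrightarrow> poly F a * poly F b > 0"
  using assms
proof (induction "root_count F {a<..<b}" arbitrary: F)
  case 0
  have "\<not> poly F a * poly F b < 0"
  proof
    assume "poly F a * poly F b < 0"
    then obtain x where "a < x" "x < b" "poly F x = 0" using poly_IVT[OF \<open>a < b\<close>] by blast
    then have "0 < root_count F {a<..<b}" using root_count_pos[OF \<open>F \<noteq> 0\<close>] by simp
    with "0.hyps" show False by linarith
  qed
  moreover have "poly F a * poly F b \<noteq> 0" using "0.prems" by simp
  ultimately have "poly F a * poly F b > 0" by linarith
  with "0.hyps" show ?case by (metis even_zero)
next
  case (Suc n)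
  have "{x. poly F x = 0 \<and> x \<in> {a<..<b}} \<noteq> {}"
    using Suc.hyps(2) unfolding root_count_def by (metis sum.empty nat.distinct(1))
  then obtain r where r: "poly F r = 0" "a < r" "r < b" by auto
  then obtain G where G: "F = [:-r, 1:] * G" using poly_eq_0_iff_dvd by blast
  with Suc.prems have G0: "G \<noteq> 0" and Gab: "poly G a \<noteq> 0" "poly G b \<noteq> 0" by auto
  have "root_count F {a<..<b} = Suc (root_count G {a<..<b})"
    unfolding G by (subst root_count_mult) (use G0 r in \<open>auto simp: root_count_linear\<close>)
  then have n: "n = root_count G {a<..<b}" using Suc.hyps(2) by linarith
  have IH: "even n \<longleftrightarrow> poly G a * poly G b > 0" using Suc.hyps(1)[OF n G0 \<open>a < b\<close> Gab] n by simp
  have neg: "(a - r) * (b - r) < 0" using r by (simp add: mult_neg_pos)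
  have "poly F a * poly F b = ((a - r) * (b - r)) * (poly G a * poly G b)"
    unfolding G by (simp add: algebra_simps)
  moreover have "0 < c * X \<longleftrightarrow> X < 0" if "c < 0" for c X :: real
    using that by (simp add: zero_less_mult_iff)
  ultimately have "poly F a * poly F b > 0 \<longleftrightarrow> poly G a * poly G b < 0"
    using neg by presburger
  moreover have "poly G a * poly G b \<noteq> 0" using Gab by simp
  ultimately have "poly F a * poly F b > 0 \<longleftrightarrow> \<not> even n" using IH by linarith
  then show ?case using Suc.hyps(2) by (metis even_Suc)
qed

lemma root_count_ge_sign_changes:
  assumes "F \<noteq> 0" "finite E" "E \<noteq> {}"
    and alt: "\<And>x y. x \<in> E \<Longrightarrow> y \<in> E \<Longrightarrow> x < y \<Longrightarrow> \<forall>z\<in>E. \<not> (x < z \<and> z < y) \<Longrightarrow>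
      poly F x * poly F y < 0"
  shows "card E \<le> root_count F {Min E<..<Max E} + 1"
  using assms(2,3,4)
proof (induction E rule: finite_linorder_max_induct)
  case (insert b E)
  show ?case
  proof (cases "E = {}")
    case False
    have alt': "poly F x * poly F y < 0"
      if "x \<in> E" "y \<in> E" "x < y" "\<forall>z\<in>E. \<not> (x < z \<and> z < y)" for x y
    proof (rule insert.prems(2))
      have "y < b" using insert.hyps(2) that(2) by blast
      then show "\<forall>z\<in>insert b E. \<not> (x < z \<and> z < y)" using that(4) by auto
    qed (use that in blast)+
    have max: "Max E \<in> E" "Min E \<le> Max E" using insert.hyps(1) False by simp_all
    have Mb: "Max E < b" using insert.hyps(2) max(1) by blast
    have "poly F (Max E) * poly F b < 0"
    proof (rule insert.prems(2))
      have "z \<le> Max E" if "z \<in> E" for z using insert.hyps(1) that by simp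
      then show "\<forall>z\<in>insert b E. \<not> (Max E < z \<and> z < b)" by fastforce
    qed (use max Mb in blast)+
    then obtain x where x: "Max E < x" "x < b" "poly F x = 0"
      using poly_IVT[OF Mb] by blast
    have ends: "Min (insert b E) = Min E" "Max (insert b E) = b"
      using insert.hyps(1) False max Mb by (simp_all add: Max_insert Min_insert)
    have "b \<notin> E" using insert.hyps(2) by blast
    then have "card (insert b E) = card E + 1" using insert.hyps(1) by simp
    also have "\<dots> \<le> root_count F {Min E<..<Max E} + 1 + 1"
      using insert.IH[OF False alt'] by linarith
    also have "\<dots> \<le> root_count F {Min E<..<Max E} + root_count F {Max E<..<b} + 1"
      using root_count_pos[OF assms(1) x(3), of "{Max E<..<b}"] x(1,2) by fastforce
    also have "\<dots> = root_count F ({Min E<..<Max E} \<union> {Max E<..<b}) + 1"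
      by (subst root_count_union[OF assms(1)]) auto
    also have "\<dots> \<le> root_count F {Min (insert b E)<..<Max (insert b E)} + 1"
      unfolding ends using max(2) Mb by (intro add_right_mono root_count_mono[OF assms(1)]) auto
    finally show ?thesis .
  qed simp
qed simp

definition down_closed :: "real set \<Rightarrow> bool" where
  "down_closed A \<longleftrightarrow> (\<forall>x y. y \<in> A \<longrightarrow> x \<le> y \<longrightarrow> x \<in> A)"

lemma down_closed_lessThan: "down_closed {..<t}"
  and down_closed_atMost: "down_closed {..t}"
  unfolding down_closed_def by auto

definition count_shift :: "nat \<Rightarrow> nat \<Rightarrow> real poly \<Rightarrow> real poly \<Rightarrow> bool" where
  "count_shift l h F G \<longleftrightarrow> (\<forall>A. down_closed A \<longrightarrow>
     root_count G A \<le> root_count F A + l \<and> root_count F A \<le> root_count G A + h)"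

lemma count_shift_trans:
  "count_shift l h F G \<Longrightarrow> count_shift l' h' G H \<Longrightarrow> count_shift (l + l') (h + h') F H"
  unfolding count_shift_def by fastforce

lemma count_shift_mult:
  "count_shift l h F G \<Longrightarrow> H \<noteq> 0 \<Longrightarrow> F \<noteq> 0 \<Longrightarrow> G \<noteq> 0 \<Longrightarrow> count_shift l h (H * F) (H * G)"
  unfolding count_shift_def by (simp add: root_count_mult)

definition node_poly :: "(nat \<Rightarrow> real) \<Rightarrow> nat set \<Rightarrow> real poly" where
  "node_poly a S = (\<Prod>q\<in>S. [:- a q, 1:])"

definition secular_poly :: "(nat \<Rightarrow> real) \<Rightarrow> (nat \<Rightarrow> real) \<Rightarrow> nat set \<Rightarrow> real poly" where
  "secular_poly a w S = node_poly a S - (\<Sum>q\<in>S. smult (w q) (node_poly a (S - {q})))"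

lemma node_poly_nonzero [simp]: "node_poly a S \<noteq> 0"
  unfolding node_poly_def by (cases "finite S") auto

lemma degree_node_poly: "finite S \<Longrightarrow> degree (node_poly a S) = card S"
  unfolding node_poly_def by (subst degree_prod_sum_eq) auto

lemma poly_node_poly: "poly (node_poly a S) x = (\<Prod>q\<in>S. x - a q)"
  unfolding node_poly_def by (simp add: poly_prod)

lemma node_poly_remove: "finite S \<Longrightarrow> q \<in> S \<Longrightarrow> node_poly a S = [:- a q, 1:] * node_poly a (S - {q})"
  unfolding node_poly_def by (simp add: prod.remove)

lemma poly_node_poly_remove:
  assumes "finite S" "q \<in> S" "x \<noteq> a q"
  shows "poly (node_poly a (S - {q})) x = poly (node_poly a S) x / (x - a q)"
  using assms by (simp add: node_poly_remove[OF assms(1,2)] field_simps)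

lemma root_count_node_poly: "finite S \<Longrightarrow> root_count (node_poly a S) A = card {q\<in>S. a q \<in> A}"
proof (induction S rule: finite_induct)
  case empty
  then show ?case unfolding node_poly_def root_count_def by simp
next
  case (insert q S)
  have "root_count (node_poly a (insert q S)) A = root_count [:- a q, 1:] A + root_count (node_poly a S) A"
    unfolding node_poly_def prod.insert[OF insert.hyps]
    by (rule root_count_mult) (use insert.hyps in auto)
  moreover have "{r \<in> insert q S. a r \<in> A} =
      (if a q \<in> A then insert q {r \<in> S. a r \<in> A} else {r \<in> S. a r \<in> A})"
    by auto
  ultimately show ?case using insert by (simp add: root_count_linear)
qed

lemma secular_poly_monic:
  assumes "finite S"
  shows "degree (secular_poly a w S) = card S \<and> lead_coeff (secular_poly a w S) = 1"
proof (cases "S = {}")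
  case False
  define T where "T = (\<Sum>q\<in>S. smult (w q) (node_poly a (S - {q})))"
  have "degree T \<le> card S - 1" unfolding T_def
  proof (rule degree_sum_le[OF assms])
    fix q assume "q \<in> S"
    then show "degree (smult (w q) (node_poly a (S - {q}))) \<le> card S - 1"
      using assms degree_smult_le[of "w q" "node_poly a (S - {q})"] by (simp add: degree_node_poly)
  qed
  moreover have "card S > 0" using False assms by (simp add: card_gt_0_iff)
  ultimately have less: "degree (- T) < degree (node_poly a S)"
    using assms by (simp add: degree_node_poly)
  have "secular_poly a w S = - T + node_poly a S" unfolding secular_poly_def T_def by simp
  moreover have "lead_coeff (node_poly a S) = 1" unfolding node_poly_def by (simp add: lead_coeff_prod)
  ultimately show ?thesis
    using degree_add_eq_right[OF less] lead_coeff_add_le[OF less] assms by (simp add: degree_node_poly)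
qed (simp add: secular_poly_def node_poly_def)

lemma secular_poly_nonzero: "finite S \<Longrightarrow> secular_poly a w S \<noteq> 0"
  using secular_poly_monic[of S a w] by auto

lemma poly_secular_poly_node:
  assumes "finite S" "q \<in> S"
  shows "poly (secular_poly a w S) (a q) = - w q * (\<Prod>r\<in>S - {q}. a q - a r)"
proof -
  have "poly (node_poly a (S - {r})) (a q) = 0" if "r \<in> S" "r \<noteq> q" for r
    unfolding poly_node_poly using assms that by (intro prod_zero) auto
  then have "(\<Sum>r\<in>S - {q}. w r * poly (node_poly a (S - {r})) (a q)) = 0"
    by (intro sum.neutral) auto
  then have "(\<Sum>r\<in>S. w r * poly (node_poly a (S - {r})) (a q)) = w q * poly (node_poly a (S - {q})) (a q)"
    using sum.remove[OF assms, of "\<lambda>r. w r * poly (node_poly a (S - {r})) (a q)"] by simp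
  moreover have "poly (node_poly a S) (a q) = 0"
    unfolding poly_node_poly using assms by (intro prod_zero) auto
  ultimately show ?thesis unfolding secular_poly_def by (simp add: poly_sum poly_node_poly)
qed

lemma sum_node_poly_factor:
  assumes "finite S" "q \<in> S"
  shows "(\<Sum>r\<in>S - {q}. smult (w r) (node_poly a (S - {r}))) =
    [:- a q, 1:] * (\<Sum>r\<in>S - {q}. smult (w r) (node_poly a (S - {q} - {r})))"
proof -
  have "smult (w r) (node_poly a (S - {r})) = [:- a q, 1:] * smult (w r) (node_poly a (S - {q} - {r}))"
    if "r \<in> S - {q}" for r
  proof -
    have "S - {r} - {q} = S - {q} - {r}" by auto
    then show ?thesis
      using node_poly_remove[of "S - {r}" q a] assms that by (simp add: mult_smult_right)
  qed
  then show ?thesis by (simp add: sum_distrib_left)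
qed

lemma secular_poly_remove_zero:
  assumes "finite S" "q \<in> S" "w q = 0"
  shows "secular_poly a w S = [:- a q, 1:] * secular_poly a w (S - {q})"
proof -
  have "(\<Sum>r\<in>S. smult (w r) (node_poly a (S - {r}))) =
      [:- a q, 1:] * (\<Sum>r\<in>S - {q}. smult (w r) (node_poly a (S - {q} - {r})))"
    using sum.remove[OF assms(1,2), of "\<lambda>r. smult (w r) (node_poly a (S - {r}))"] assms(3)
    by (simp add: sum_node_poly_factor[OF assms(1,2)])
  then show ?thesis
    unfolding secular_poly_def node_poly_remove[OF assms(1,2), of a] by (simp add: right_diff_distrib)
qed

lemma secular_poly_merge:
  assumes "finite S" "q \<in> S" "p \<in> S" "p \<noteq> q" "a p = a q"
  shows "secular_poly a w S = [:- a q, 1:] * secular_poly a (w(p := w p + w q)) (S - {q})"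
proof -
  define w' where "w' = w(p := w p + w q)"
  have p: "p \<in> S - {q}" "finite (S - {q})" using assms by auto
  have "(\<Sum>r\<in>S - {q}. smult (w' r) (node_poly a (S - {q} - {r}))) =
      (\<Sum>r\<in>S - {q}. smult (w r) (node_poly a (S - {q} - {r})) +
        (if r = p then smult (w q) (node_poly a (S - {q} - {p})) else 0))"
    by (rule sum.cong) (auto simp: w'_def smult_add_left)
  also have "\<dots> = (\<Sum>r\<in>S - {q}. smult (w r) (node_poly a (S - {q} - {r}))) +
      smult (w q) (node_poly a (S - {q} - {p}))"
    using p by (simp add: sum.distrib)
  finally have w': "(\<Sum>r\<in>S - {q}. smult (w' r) (node_poly a (S - {q} - {r}))) =
      (\<Sum>r\<in>S - {q}. smult (w r) (node_poly a (S - {q} - {r}))) +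
      smult (w q) (node_poly a (S - {q} - {p}))" .
  have "node_poly a (S - {q}) = [:- a q, 1:] * node_poly a (S - {q} - {p})"
    using node_poly_remove[OF p(2,1), of a] assms(5) by simp
  then have "(\<Sum>r\<in>S. smult (w r) (node_poly a (S - {r}))) =
      [:- a q, 1:] * (\<Sum>r\<in>S - {q}. smult (w' r) (node_poly a (S - {q} - {r})))"
    using sum.remove[OF assms(1,2), of "\<lambda>r. smult (w r) (node_poly a (S - {r}))"]
    unfolding w' sum_node_poly_factor[OF assms(1,2)] by (simp add: mult_smult_right distrib_left)
  then show ?thesis
    unfolding secular_poly_def node_poly_remove[OF assms(1,2), of a] w'_def[symmetric]
    by (simp add: right_diff_distrib)
qed

lemma prod_sign_count:
  fixes f :: "'a \<Rightarrow> real"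
  assumes "finite T" "\<forall>r\<in>T. f r \<noteq> 0"
  shows "0 < (-1) ^ card {r\<in>T. f r < 0} * prod f T"
  using assms
proof (induction T rule: finite_induct)
  case (insert r T)
  define c where "c = card {x\<in>T. f x < 0}"
  have IH: "0 < (-1) ^ c * prod f T" using insert by (simp add: c_def)
  show ?case
  proof (cases "f r < 0")
    case True
    then have "{x \<in> insert r T. f x < 0} = insert r {x\<in>T. f x < 0}" by auto
    then have "card {x \<in> insert r T. f x < 0} = Suc c" using insert.hyps by (simp add: c_def)
    then have "(-1) ^ card {x \<in> insert r T. f x < 0} * prod f (insert r T) = (- f r) * ((-1) ^ c * prod f T)"
      using insert.hyps by simp
    then show ?thesis using True IH by (simp add: mult_neg_pos)
  next
    case False
    then have "card {x \<in> insert r T. f x < 0} = c" unfolding c_def by (metis insert_iff)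
    moreover have "0 < f r" using False insert.prems by force
    moreover have "0 < f r * ((-1) ^ c * prod f T)" using \<open>0 < f r\<close> IH by (rule mult_pos_pos)
    ultimately show ?thesis using insert.hyps by (simp add: mult.left_commute)
  qed
qed simp

lemma secular_poly_sign_at_node:
  assumes "finite S" "inj_on a S" "q \<in> S" "w q \<noteq> 0"
  shows "(-1) ^ card {r\<in>S. a q < a r} * w q * poly (secular_poly a w S) (a q) < 0"
proof -
  define P where "P = (\<Prod>r\<in>S - {q}. a q - a r)"
  define c where "c = card {r\<in>S. a q < a r}"
  have "{r \<in> S - {q}. a q - a r < 0} = {r\<in>S. a q < a r}" by auto
  moreover have "\<forall>r\<in>S - {q}. a q - a r \<noteq> 0" using assms(2,3) by (auto dest: inj_onD)
  ultimately have "0 < (-1) ^ c * P"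
    using prod_sign_count[of "S - {q}" "\<lambda>r. a q - a r"] assms(1) unfolding P_def c_def by simp
  then have pos: "0 < (w q)\<^sup>2 * ((-1) ^ c * P)" using assms(4) by simp
  have "(-1) ^ c * w q * poly (secular_poly a w S) (a q) = - ((w q)\<^sup>2 * ((-1) ^ c * P))"
    unfolding poly_secular_poly_node[OF assms(1,3)] P_def by (simp add: power2_eq_square algebra_simps)
  then show ?thesis using pos unfolding c_def by linarith
qed

lemma secular_poly_alternates:
  assumes "finite S" "inj_on a S" "q \<in> S" "p \<in> S" "a q < a p"
    and "\<forall>r\<in>S. \<not> (a q < a r \<and> a r < a p)" "0 < w q * w p"
  shows "poly (secular_poly a w S) (a q) * poly (secular_poly a w S) (a p) < 0"
proof -
  define F where "F = secular_poly a w S"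
  define c where "c = card {r\<in>S. a p < a r}"
  have "{r\<in>S. a q < a r} = insert p {r\<in>S. a p < a r}"
    using assms(2-6) by (auto dest: inj_onD simp: not_less le_less)
  then have cq: "card {r\<in>S. a q < a r} = Suc c" using assms(1) by (simp add: c_def)
  have w: "w q \<noteq> 0" "w p \<noteq> 0" using assms(7) by auto
  have X: "(-1) ^ Suc c * w q * poly F (a q) < 0"
    using secular_poly_sign_at_node[where w = w, OF assms(1-3) w(1)] unfolding cq F_def .
  have Y: "(-1) ^ c * w p * poly F (a p) < 0"
    using secular_poly_sign_at_node[where w = w, OF assms(1,2,4) w(2)] unfolding c_def F_def .
  have "(-1::real) ^ c * (-1) ^ c = 1" by (simp add: power_mult_distrib[symmetric])
  then have "((-1) ^ Suc c * w q * poly F (a q)) * ((-1) ^ c * w p * poly F (a p)) =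
      - ((w q * w p) * (poly F (a q) * poly F (a p)))"
    by (simp add: algebra_simps)
  moreover have "0 < ((-1) ^ Suc c * w q * poly F (a q)) * ((-1) ^ c * w p * poly F (a p))"
    using X Y by (rule mult_neg_neg)
  moreover have "Z < 0" if "0 < W" "0 < - (W * Z)" for W Z :: real
    using that by (simp add: mult_less_0_iff)
  ultimately show ?thesis unfolding F_def using assms(7) by metis
qed

lemma secular_poly_root_count_convex:
  assumes "finite S" "inj_on a S" "\<forall>q\<in>S. \<forall>p\<in>S. 0 < w q * w p"
    and "E \<subseteq> a ` S" "E \<noteq> {}" and convex: "\<And>x y z. x \<in> E \<Longrightarrow> y \<in> E \<Longrightarrow> z \<in> a ` S \<Longrightarrow> x < z \<Longrightarrow> z < y \<Longrightarrow> z \<in> E"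
  shows "card E \<le> root_count (secular_poly a w S) {Min E<..<Max E} + 1"
proof (rule root_count_ge_sign_changes)
  show "secular_poly a w S \<noteq> 0" using assms(1) by (rule secular_poly_nonzero)
  show "finite E" using assms(1,4) finite_surj by blast
  fix x y assume xy: "x \<in> E" "y \<in> E" "x < y" "\<forall>z\<in>E. \<not> (x < z \<and> z < y)"
  then obtain q p where qp: "q \<in> S" "p \<in> S" "x = a q" "y = a p" using assms(4) by blast
  have "\<forall>r\<in>S. \<not> (a q < a r \<and> a r < a p)" using convex xy qp by blast
  then show "poly (secular_poly a w S) x * poly (secular_poly a w S) y < 0"
    using secular_poly_alternates[OF assms(1,2)] qp xy(3) assms(3) by blast
qed fact

lemma poly_sign_at_bot:
  fixes F :: "real poly"
  assumes "lead_coeff F > 0"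
  shows "\<exists>X. \<forall>x\<le>X. 0 < (-1) ^ degree F * poly F x"
proof -
  define G where "G = smult ((-1) ^ degree F) (F \<circ>\<^sub>p [:0, -1:])"
  have "lead_coeff G = lead_coeff F * ((-1) ^ degree F * (-1) ^ degree F)"
    using lead_coeff_comp[of "[:0, -1:]" F] unfolding G_def by (simp add: ac_simps)
  also have "(-1) ^ degree F * (-1) ^ degree F = (1::real)" by (simp add: power_mult_distrib[symmetric])
  finally obtain X where X: "\<forall>x\<ge>X. lead_coeff F \<le> poly G x"
    using poly_pinfty_gt_lc[of G] assms by auto
  have "0 < (-1) ^ degree F * poly F x" if "x \<le> - X" for x
  proof -
    have "poly G (- x) = (-1) ^ degree F * poly F x" unfolding G_def by (simp add: poly_pcompose)
    moreover have "lead_coeff F \<le> poly G (- x)" using X that by simp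
    ultimately show ?thesis using assms by linarith
  qed
  then show ?thesis by blast
qed

lemma root_count_add_root:
  assumes "F \<noteq> 0" "poly F \<rho> = 0" "\<rho> \<notin> I" "insert \<rho> I \<subseteq> B"
  shows "root_count F I + 1 \<le> root_count F B"
proof -
  have "root_count F I + 1 \<le> root_count F I + root_count F {\<rho>}"
    using root_count_pos[OF assms(1,2), of "{\<rho>}"] by simp
  also have "\<dots> = root_count F (insert \<rho> I)"
    using root_count_union[OF assms(1), of I "{\<rho>}"] assms(3) by simp
  also have "\<dots> \<le> root_count F B" using root_count_mono[OF assms(1,4)] .
  finally show ?thesis .
qed

lemma root_count_compl_le_degree:
  "F \<noteq> 0 \<Longrightarrow> root_count F A + root_count F (- A) \<le> degree F"
  using root_count_union[of F A "- A"] root_count_le_degree[of F UNIV] by simp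

lemma down_closedD: "down_closed A \<Longrightarrow> y \<in> A \<Longrightarrow> x \<le> y \<Longrightarrow> x \<in> A"
  unfolding down_closed_def by blast

lemma secular_poly_root_above:
  assumes "finite S" "S \<noteq> {}" "inj_on a S" "\<forall>q\<in>S. 0 < w q"
  obtains \<rho> where "\<forall>q\<in>S. a q < \<rho>" "poly (secular_poly a w S) \<rho> = 0"
proof -
  define F where "F = secular_poly a w S"
  have "Max (a ` S) \<in> a ` S" using assms(1,2) by simp
  then obtain q where q: "q \<in> S" "a q = Max (a ` S)" by (metis imageE)
  then have le: "\<forall>r\<in>S. a r \<le> a q" using assms(1) by simp
  then have none: "{r\<in>S. a q < a r} = {}" by force
  have wq: "0 < w q" using assms(4) q(1) by blast
  then have "w q * poly F (a q) < 0"
    using secular_poly_sign_at_node[where w = w, OF assms(1,3) q(1)] unfolding none F_def by simp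
  then have neg: "poly F (a q) < 0" using wq by (simp add: mult_less_0_iff)
  obtain X where X: "\<forall>x\<ge>X. 1 \<le> poly F x"
    using poly_pinfty_gt_lc[of F] secular_poly_monic[OF assms(1), of a w] unfolding F_def by auto
  define x where "x = max X (a q + 1)"
  have "1 \<le> poly F x" using X unfolding x_def by simp
  moreover have "a q < x" unfolding x_def by simp
  ultimately obtain \<rho> where "a q < \<rho>" "poly F \<rho> = 0"
    using poly_IVT_pos[of "a q" x F] neg by force
  with le show thesis using that unfolding F_def by force
qed

lemma secular_poly_root_below:
  assumes "finite S" "S \<noteq> {}" "inj_on a S" "\<forall>q\<in>S. w q < 0"
  obtains \<rho> where "\<forall>q\<in>S. \<rho> < a q" "poly (secular_poly a w S) \<rho> = 0"
proof -
  define F where "F = secular_poly a w S"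
  obtain k where k: "card S = Suc k" using assms(1,2) by (metis card_gt_0_iff gr0_implies_Suc)
  have "Min (a ` S) \<in> a ` S" using assms(1,2) by simp
  then obtain q where q: "q \<in> S" "a q = Min (a ` S)" by (metis imageE)
  then have le: "\<forall>r\<in>S. a q \<le> a r" using assms(1) by simp
  have "a q < a r" if "r \<in> S - {q}" for r
  proof -
    have "a r \<noteq> a q" using assms(3) q(1) that by (auto dest: inj_onD)
    then show ?thesis using le that by force
  qed
  then have "{r\<in>S. a q < a r} = S - {q}" by auto
  then have above: "card {r\<in>S. a q < a r} = k" using assms(1) q(1) k by simp
  have wq: "w q < 0" using assms(4) q(1) by blast
  then have "(-1) ^ k * w q * poly F (a q) < 0"
    using secular_poly_sign_at_node[where w = w, OF assms(1,3) q(1)] unfolding above F_def by simp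
  then have "w q * ((-1) ^ k * poly F (a q)) < 0" by (simp add: ac_simps)
  moreover have "0 < y" if "x * y < 0" "x < 0" for x y :: real
    using that by (simp add: mult_less_0_iff)
  ultimately have pos_q: "0 < (-1) ^ k * poly F (a q)" using wq by blast
  obtain X where X: "\<forall>x\<le>X. 0 < (-1) ^ Suc k * poly F x"
    using poly_sign_at_bot[of F] secular_poly_monic[OF assms(1), of a w] k unfolding F_def by auto
  define x where "x = min X (a q - 1)"
  have "0 < (-1) ^ Suc k * poly F x" using X unfolding x_def by simp
  then have "0 < ((-1) ^ Suc k * poly F x) * ((-1) ^ k * poly F (a q))" using pos_q by (rule mult_pos_pos)
  moreover have "(-1::real) ^ k * (-1) ^ k = 1" by (simp add: power_mult_distrib[symmetric])
  ultimately have "poly F x * poly F (a q) < 0" by (simp add: algebra_simps)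
  moreover have "x < a q" unfolding x_def by simp
  ultimately obtain \<rho> where "x < \<rho>" "\<rho> < a q" "poly F \<rho> = 0"
    using poly_IVT[of x "a q" F] by force
  with le show thesis using that unfolding F_def by force
qed

lemma secular_poly_count_nodes_in:
  assumes "finite S" "inj_on a S" "\<forall>q\<in>S. \<forall>p\<in>S. 0 < w q * w p" "down_closed A"
  shows "card {q\<in>S. a q \<in> A} \<le> root_count (secular_poly a w S) A + 1"
    and "\<forall>q\<in>S. w q < 0 \<Longrightarrow> card {q\<in>S. a q \<in> A} \<le> root_count (secular_poly a w S) A"
proof -
  define F where "F = secular_poly a w S"
  define L where "L = {q\<in>S. a q \<in> A}"
  define E where "E = a ` L"
  have F: "F \<noteq> 0" unfolding F_def using assms(1) by (rule secular_poly_nonzero)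
  have card: "card E = card L" unfolding E_def L_def using assms(2) by (intro card_image) (auto intro: inj_on_subset)
  have E: "finite E" "E \<subseteq> A" "E \<subseteq> a ` S" unfolding E_def L_def using assms(1) by auto
  have hull: "{Min E<..<Max E} \<subseteq> A" if "E \<noteq> {}"
  proof -
    have "Max E \<in> A" using Max_in[OF E(1) that] E(2) by blast
    then show ?thesis using down_closedD[OF assms(4)] by fastforce
  qed
  have bound: "card L \<le> root_count F {Min E<..<Max E} + 1" if "E \<noteq> {}"
    unfolding card[symmetric] F_def
  proof (rule secular_poly_root_count_convex[OF assms(1-3) _ that])
    show "E \<subseteq> a ` S" by (fact E(3))
    fix x y z assume "x \<in> E" "y \<in> E" "z \<in> a ` S" "x < z" "z < y"
    then show "z \<in> E" unfolding E_def L_def using down_closedD[OF assms(4)] by fastforce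
  qed
  show "card L \<le> root_count F A + 1"
  proof (cases "E = {}")
    case False
    have "root_count F {Min E<..<Max E} \<le> root_count F A" by (rule root_count_mono[OF F hull[OF False]])
    then show ?thesis using bound[OF False] by linarith
  qed (simp add: E_def)
  assume neg: "\<forall>q\<in>S. w q < 0"
  show "card L \<le> root_count F A"
  proof (cases "E = {}")
    case False
    then have "S \<noteq> {}" unfolding E_def L_def by auto
    then obtain \<rho> where \<rho>: "\<forall>q\<in>S. \<rho> < a q" "poly F \<rho> = 0"
      using secular_poly_root_below[OF assms(1) _ assms(2) neg] unfolding F_def by blast
    have "Min E \<in> E" using Min_in[OF E(1) False] .
    then have "\<rho> < Min E" using \<rho>(1) E(3) by fastforce
    then have "\<rho> \<in> A" using down_closedD[OF assms(4)] \<open>Min E \<in> E\<close> E(2) by (meson less_imp_le subsetD)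
    have "root_count F {Min E<..<Max E} + 1 \<le> root_count F A"
      by (rule root_count_add_root[OF F \<rho>(2)]) (use \<open>\<rho> < Min E\<close> \<open>\<rho> \<in> A\<close> hull[OF False] in auto)
    then show ?thesis using bound[OF False] by linarith
  qed (simp add: E_def)
qed

lemma secular_poly_count_nodes_out:
  assumes "finite S" "inj_on a S" "\<forall>q\<in>S. \<forall>p\<in>S. 0 < w q * w p" "down_closed A"
  shows "card {q\<in>S. a q \<notin> A} \<le> root_count (secular_poly a w S) (- A) + 1"
    and "\<forall>q\<in>S. 0 < w q \<Longrightarrow> card {q\<in>S. a q \<notin> A} \<le> root_count (secular_poly a w S) (- A)"
proof -
  define F where "F = secular_poly a w S"
  define U where "U = {q\<in>S. a q \<notin> A}"
  define E where "E = a ` U"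
  have F: "F \<noteq> 0" unfolding F_def using assms(1) by (rule secular_poly_nonzero)
  have card: "card E = card U" unfolding E_def U_def using assms(2) by (intro card_image) (auto intro: inj_on_subset)
  have E: "finite E" "E \<subseteq> - A" "E \<subseteq> a ` S" unfolding E_def U_def using assms(1) by auto
  have above: "z \<in> - A" if "x \<in> E" "x \<le> z" for x z
    using that E(2) down_closedD[OF assms(4), of z x] by auto
  have hull: "{Min E<..<Max E} \<subseteq> - A" if "E \<noteq> {}"
    using above Min_in[OF E(1) that] by fastforce
  have bound: "card U \<le> root_count F {Min E<..<Max E} + 1" if "E \<noteq> {}"
    unfolding card[symmetric] F_def
  proof (rule secular_poly_root_count_convex[OF assms(1-3) E(3) that])
    fix x y z assume "x \<in> E" "y \<in> E" "z \<in> a ` S" "x < z" "z < y"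
    then have "z \<in> - A" using above[of x z] by simp
    then show "z \<in> E" using \<open>z \<in> a ` S\<close> unfolding E_def U_def by auto
  qed
  show "card U \<le> root_count F (- A) + 1"
  proof (cases "E = {}")
    case False
    have "root_count F {Min E<..<Max E} \<le> root_count F (- A)" by (rule root_count_mono[OF F hull[OF False]])
    then show ?thesis using bound[OF False] by linarith
  qed (simp add: E_def)
  assume pos: "\<forall>q\<in>S. 0 < w q"
  show "card U \<le> root_count F (- A)"
  proof (cases "E = {}")
    case False
    then have "S \<noteq> {}" unfolding E_def U_def by auto
    then obtain \<rho> where \<rho>: "\<forall>q\<in>S. a q < \<rho>" "poly F \<rho> = 0"
      using secular_poly_root_above[OF assms(1) _ assms(2) pos] unfolding F_def by blast
    have "Max E \<in> E" "Min E \<in> E" using Max_in[OF E(1) False] Min_in[OF E(1) False] .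
    then have "Max E < \<rho>" "Min E < \<rho>" using \<rho>(1) E(3) by fastforce+
    then have "\<rho> \<in> - A" using above \<open>Min E \<in> E\<close> by (meson less_imp_le)
    have "root_count F {Min E<..<Max E} + 1 \<le> root_count F (- A)"
      by (rule root_count_add_root[OF F \<rho>(2)]) (use \<open>Max E < \<rho>\<close> \<open>\<rho> \<in> - A\<close> hull[OF False] in auto)
    then show ?thesis using bound[OF False] by linarith
  qed (simp add: E_def)
qed

lemma secular_poly_count_shift_generic:
  assumes "finite S" "inj_on a S"
  shows "\<forall>q\<in>S. 0 < w q \<Longrightarrow> count_shift 1 0 (secular_poly a w S) (node_poly a S)"
    and "\<forall>q\<in>S. w q < 0 \<Longrightarrow> count_shift 0 1 (secular_poly a w S) (node_poly a S)"
proof -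
  define F where "F = secular_poly a w S"
  have split: "card {q\<in>S. a q \<in> A} + card {q\<in>S. a q \<notin> A} = card S" for A
  proof -
    have "{q\<in>S. a q \<in> A} = S \<inter> {q. a q \<in> A}" "{q\<in>S. a q \<notin> A} = S - {q. a q \<in> A}" by auto
    then show ?thesis using card_Int_Diff[OF assms(1), of "{q. a q \<in> A}"] by simp
  qed
  have total: "root_count F A + root_count F (- A) \<le> card S" for A
    using root_count_compl_le_degree[OF secular_poly_nonzero[OF assms(1)]] secular_poly_monic[OF assms(1)]
    unfolding F_def by metis
  have node: "root_count (node_poly a S) A = card {q\<in>S. a q \<in> A}" for A
    by (rule root_count_node_poly[OF assms(1)])
  show "count_shift 1 0 F (node_poly a S)" if pos: "\<forall>q\<in>S. 0 < w q"
    unfolding count_shift_def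
  proof (intro allI impI conjI)
    fix A assume A: "down_closed A"
    have ww: "\<forall>q\<in>S. \<forall>p\<in>S. 0 < w q * w p" using pos by simp
    show "root_count (node_poly a S) A \<le> root_count F A + 1"
      using secular_poly_count_nodes_in(1)[OF assms ww A] node unfolding F_def by simp
    show "root_count F A \<le> root_count (node_poly a S) A + 0"
      using secular_poly_count_nodes_out(2)[OF assms ww A pos] total[of A] split[of A] node[of A]
      unfolding F_def by linarith
  qed
  show "count_shift 0 1 F (node_poly a S)" if neg: "\<forall>q\<in>S. w q < 0"
    unfolding count_shift_def
  proof (intro allI impI conjI)
    fix A assume A: "down_closed A"
    have ww: "\<forall>q\<in>S. \<forall>p\<in>S. 0 < w q * w p" using neg by (simp add: mult_neg_neg)
    show "root_count (node_poly a S) A \<le> root_count F A + 0"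
      using secular_poly_count_nodes_in(2)[OF assms ww A neg] node unfolding F_def by simp
    show "root_count F A \<le> root_count (node_poly a S) A + 1"
      using secular_poly_count_nodes_out(1)[OF assms ww A] total[of A] split[of A] node[of A]
      unfolding F_def by linarith
  qed
qed

lemma secular_poly_count_shift_reduce:
  assumes "finite S" "\<forall>q\<in>S. w q \<in> C" "\<And>x y. x \<in> C \<Longrightarrow> y \<in> C \<Longrightarrow> x + y \<in> C"
    and generic: "\<And>S w. finite S \<Longrightarrow> inj_on a S \<Longrightarrow> \<forall>q\<in>S. w q \<in> C - {0} \<Longrightarrow>
      count_shift l h (secular_poly a w S) (node_poly a S)"
  shows "count_shift l h (secular_poly a w S) (node_poly a S)"
  using assms(1,2)
proof (induction "card S" arbitrary: S w rule: less_induct)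
  case less
  show ?case
  proof (cases "\<exists>q\<in>S. w q = 0")
    case True
    then obtain q where q: "q \<in> S" "w q = 0" by blast
    have "card (S - {q}) < card S" using less.prems(1) q(1) by (rule card_Diff1_less)
    then have "count_shift l h (secular_poly a w (S - {q})) (node_poly a (S - {q}))"
      by (rule less.hyps) (use less.prems in auto)
    then show ?thesis
      unfolding secular_poly_remove_zero[where w = w, OF less.prems(1) q] node_poly_remove[OF less.prems(1) q(1)]
      by (rule count_shift_mult) (simp_all add: secular_poly_nonzero less.prems(1))
  next
    case nonzero: False
    show ?thesis
    proof (cases "inj_on a S")
      case True
      then show ?thesis using generic less.prems nonzero by blast
    next
      case False
      then obtain p q where pq: "q \<in> S" "p \<in> S" "p \<noteq> q" "a p = a q" unfolding inj_on_def by blast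
      have "card (S - {q}) < card S" using less.prems(1) pq(1) by (rule card_Diff1_less)
      then have "count_shift l h (secular_poly a (w(p := w p + w q)) (S - {q})) (node_poly a (S - {q}))"
        by (rule less.hyps) (use less.prems pq(1,2) assms(3) in auto)
      then show ?thesis
        unfolding secular_poly_merge[OF less.prems(1) pq] node_poly_remove[OF less.prems(1) pq(1)]
        by (rule count_shift_mult) (simp_all add: secular_poly_nonzero less.prems(1))
    qed
  qed
qed

lemma secular_poly_count_shift_nonneg:
  assumes "finite S" "\<forall>q\<in>S. 0 \<le> w q"
  shows "count_shift 1 0 (secular_poly a w S) (node_poly a S)"
  by (rule secular_poly_count_shift_reduce[where C = "{0..}"])
    (use assms secular_poly_count_shift_generic(1) in \<open>auto simp: less_le\<close>)

lemma secular_poly_count_shift_nonpos: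
  assumes "finite S" "\<forall>q\<in>S. w q \<le> 0"
  shows "count_shift 0 1 (secular_poly a w S) (node_poly a S)"
  by (rule secular_poly_count_shift_reduce[where C = "{..0}"])
    (use assms secular_poly_count_shift_generic(2) in \<open>auto simp: less_le\<close>)

lemma det_dim_2:
  fixes A :: "'a::comm_ring_1 mat"
  assumes A: "A \<in> carrier_mat 2 2"
  shows "det A = A $$ (0,0) * A $$ (1,1) - A $$ (0,1) * A $$ (1,0)"
proof -
  have "det A = (\<Sum>i<2. A $$ (i,0) * cofactor A i 0)" by (rule laplace_expansion_column[OF A]) simp
  also have "\<dots> = A $$ (0,0) * cofactor A 0 0 + A $$ (1,0) * cofactor A 1 0"
    by (simp add: numeral_2_eq_2)
  also have "cofactor A 0 0 = A $$ (1,1)"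
    unfolding cofactor_def using A by (simp add: det_single mat_delete_def)
  also have "cofactor A 1 0 = - A $$ (0,1)"
    unfolding cofactor_def using A by (simp add: det_single mat_delete_def)
  finally show ?thesis by (simp add: algebra_simps)
qed

lemma det_one_minus_mult_swap:
  fixes X :: "'a::idom mat"
  assumes X: "X \<in> carrier_mat n k" and Y: "Y \<in> carrier_mat k n"
  shows "det (1\<^sub>m n - X * Y) = det (1\<^sub>m k - Y * X)"
proof -
  define K where "K = four_block_mat (1\<^sub>m n) X Y (1\<^sub>m k)"
  define L1 where "L1 = four_block_mat (1\<^sub>m n) (0\<^sub>m n k) (- Y) (1\<^sub>m k)"
  define L2 where "L2 = four_block_mat (1\<^sub>m n) (- X) (0\<^sub>m k n) (1\<^sub>m k)"
  have K: "K \<in> carrier_mat (n+k) (n+k)" unfolding K_def using X Y by auto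
  have L1: "L1 \<in> carrier_mat (n+k) (n+k)" unfolding L1_def using X Y by auto
  have L2: "L2 \<in> carrier_mat (n+k) (n+k)" unfolding L2_def using X Y by auto
  have XY: "X * Y \<in> carrier_mat n n" "Y * X \<in> carrier_mat k k" using X Y by auto
  have "L1 * K = four_block_mat (1\<^sub>m n * 1\<^sub>m n + 0\<^sub>m n k * Y) (1\<^sub>m n * X + 0\<^sub>m n k * 1\<^sub>m k)
      (- Y * 1\<^sub>m n + 1\<^sub>m k * Y) (- Y * X + 1\<^sub>m k * 1\<^sub>m k)"
    unfolding L1_def K_def by (rule mult_four_block_mat) (use X Y in auto)
  also have "\<dots> = four_block_mat (1\<^sub>m n) X (0\<^sub>m k n) (1\<^sub>m k - Y * X)"
  proof -
    have "1\<^sub>m n * 1\<^sub>m n + 0\<^sub>m n k * Y = 1\<^sub>m n" using Y by simp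
    moreover have "1\<^sub>m n * X + 0\<^sub>m n k * 1\<^sub>m k = X" using X by simp
    moreover have "- Y * 1\<^sub>m n + 1\<^sub>m k * Y = 0\<^sub>m k n"
      by (rule eq_matI) (use Y in auto)
    moreover have "- Y * X + 1\<^sub>m k * 1\<^sub>m k = 1\<^sub>m k - Y * X"
      by (rule eq_matI) (use X Y in \<open>auto simp: uminus_mult_left_mat\<close>)
    ultimately show ?thesis by simp
  qed
  finally have e1: "L1 * K = four_block_mat (1\<^sub>m n) X (0\<^sub>m k n) (1\<^sub>m k - Y * X)" .
  have "L2 * K = four_block_mat (1\<^sub>m n * 1\<^sub>m n + - X * Y) (1\<^sub>m n * X + - X * 1\<^sub>m k)
      (0\<^sub>m k n * 1\<^sub>m n + 1\<^sub>m k * Y) (0\<^sub>m k n * X + 1\<^sub>m k * 1\<^sub>m k)"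
    unfolding L2_def K_def by (rule mult_four_block_mat) (use X Y in auto)
  also have "\<dots> = four_block_mat (1\<^sub>m n - X * Y) (0\<^sub>m n k) Y (1\<^sub>m k)"
  proof -
    have "1\<^sub>m n * 1\<^sub>m n + - X * Y = 1\<^sub>m n - X * Y"
      by (rule eq_matI) (use X Y in \<open>auto simp: uminus_mult_left_mat\<close>)
    moreover have "1\<^sub>m n * X + - X * 1\<^sub>m k = 0\<^sub>m n k"
      by (rule eq_matI) (use X in auto)
    moreover have "0\<^sub>m k n * 1\<^sub>m n + 1\<^sub>m k * Y = Y" using Y by simp
    moreover have "0\<^sub>m k n * X + 1\<^sub>m k * 1\<^sub>m k = 1\<^sub>m k" using X by simp
    ultimately show ?thesis by simp
  qed
  finally have e2: "L2 * K = four_block_mat (1\<^sub>m n - X * Y) (0\<^sub>m n k) Y (1\<^sub>m k)" .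
  have dL1: "det L1 = 1" unfolding L1_def
    by (subst det_four_block_mat_upper_right_zero[of _ n _ k]) (use Y in auto)
  have dL2: "det L2 = 1" unfolding L2_def
    by (subst det_four_block_mat_lower_left_zero[of _ n _ k]) (use X in auto)
  have "det K = det (1\<^sub>m k - Y * X)"
  proof -
    have "det (L1 * K) = det L1 * det K" by (rule det_mult[OF L1 K])
    moreover have "det (L1 * K) = det (1\<^sub>m k - Y * X)" unfolding e1
      by (subst det_four_block_mat_lower_left_zero[of _ n _ k]) (use X Y in auto)
    ultimately show ?thesis using dL1 by simp
  qed
  moreover have "det K = det (1\<^sub>m n - X * Y)"
  proof -
    have "det (L2 * K) = det L2 * det K" by (rule det_mult[OF L2 K])
    moreover have "det (L2 * K) = det (1\<^sub>m n - X * Y)" unfolding e2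
      by (subst det_four_block_mat_upper_right_zero[of _ n _ k]) (use X Y in auto)
    ultimately show ?thesis using dL2 by simp
  qed
  ultimately show ?thesis by simp
qed

lemma det_mat_diag: "det (mat_diag n f) = (\<Prod>i<n. f i)"
  by (subst det_upper_triangular[of _ n])
    (auto simp: upper_triangular_def mat_diag_def prod_list_diag_prod atLeast0LessThan)

definition resolvent_form :: "nat \<Rightarrow> (nat \<Rightarrow> real) \<Rightarrow> (nat \<Rightarrow> real) \<Rightarrow> (nat \<Rightarrow> real) \<Rightarrow> real \<Rightarrow> real" where
  "resolvent_form n a u v x = (\<Sum>i<n. u i * v i / (x - a i))"

lemma poly_char_poly_rank2_mod:
  assumes x: "\<forall>i<n. x \<noteq> a i"
  shows "poly (char_poly (rank2_mod n a s t u w)) x = (\<Prod>i<n. x - a i) *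
    ((1 - s * resolvent_form n a u u x) * (1 - t * resolvent_form n a w w x) - s * t * (resolvent_form n a u w x)\<^sup>2)"
proof -
  define A where "A = rank2_mod n a s t u w"
  have A: "A \<in> carrier_mat n n" unfolding A_def rank2_mod_def by simp
  define R where "R = mat_diag n (\<lambda>i. x - a i)"
  define X where "X = mat n 2 (\<lambda>(i,c). (if c = 0 then u i else w i) / (x - a i))"
  define Y where "Y = mat 2 n (\<lambda>(c,j). if c = 0 then s * u j else t * w j)"
  have R: "R \<in> carrier_mat n n" and X: "X \<in> carrier_mat n 2" and Y: "Y \<in> carrier_mat 2 n"
    unfolding R_def X_def Y_def by auto
  have Z: "1\<^sub>m n - X * Y \<in> carrier_mat n n" using X Y by auto
  have "- char_matrix A x = R * (1\<^sub>m n - X * Y)"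
  proof (rule eq_matI)
    fix i j assume "i < dim_row (R * (1\<^sub>m n - X * Y))" "j < dim_col (R * (1\<^sub>m n - X * Y))"
    then have ij: "i < n" "j < n" using R Z by auto
    have cancel: "r * (1 - (p / r + q / r)) = r - p - q" "r * (- (p / r) - q / r) = - p - q"
      if "r \<noteq> 0" for r p q :: real
      using that by (simp_all add: field_simps)
    show "(- char_matrix A x) $$ (i,j) = (R * (1\<^sub>m n - X * Y)) $$ (i,j)"
      using ij A Z x unfolding R_def mat_diag_mult_left[OF Z]
      by (simp add: X_def Y_def char_matrix_def A_def rank2_mod_def scalar_prod_def numeral_2_eq_2 cancel)
  qed (use A R Z in \<open>auto simp: char_matrix_def\<close>)
  then have "poly (char_poly A) x = det R * det (1\<^sub>m n - X * Y)"
    using char_poly_matrix[OF A] det_mult[OF R Z] by simp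
  also have "det (1\<^sub>m n - X * Y) = det (1\<^sub>m 2 - Y * X)" by (rule det_one_minus_mult_swap[OF X Y])
  also have "\<dots> = (1 - s * resolvent_form n a u u x) * (1 - t * resolvent_form n a w w x)
      - s * t * (resolvent_form n a u w x)\<^sup>2"
  proof -
    have M: "1\<^sub>m 2 - Y * X \<in> carrier_mat 2 2" using X Y by auto
    have entries: "(1\<^sub>m 2 - Y * X) $$ (0,0) = 1 - s * resolvent_form n a u u x"
      "(1\<^sub>m 2 - Y * X) $$ (1,1) = 1 - t * resolvent_form n a w w x"
      "(1\<^sub>m 2 - Y * X) $$ (0,1) = - (s * resolvent_form n a u w x)"
      "(1\<^sub>m 2 - Y * X) $$ (1,0) = - (t * resolvent_form n a u w x)"
      using X Y unfolding X_def Y_def resolvent_form_def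
      by (auto simp: scalar_prod_def sum_distrib_left atLeast0LessThan[symmetric] algebra_simps)
    show ?thesis unfolding det_dim_2[OF M] entries by (simp add: power2_eq_square algebra_simps)
  qed
  finally show ?thesis unfolding A_def R_def det_mat_diag .
qed

definition rank2_secular_poly :: "nat \<Rightarrow> (nat \<Rightarrow> real) \<Rightarrow> real \<Rightarrow> real \<Rightarrow> (nat \<Rightarrow> real) \<Rightarrow> (nat \<Rightarrow> real) \<Rightarrow> real poly" where
  "rank2_secular_poly n a s t u w = secular_poly a (\<lambda>q. s * (u q)\<^sup>2 + t * (w q)\<^sup>2) {..<n}
    + smult (s * t / 2) (\<Sum>q<n. \<Sum>r<n. smult ((u q * w r - u r * w q)\<^sup>2) (node_poly a ({..<n} - {q} - {r})))"

lemma lagrange_identity_weighted: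
  fixes u w e :: "nat \<Rightarrow> real"
  shows "(\<Sum>q<n. \<Sum>r<n. (u q * w r - u r * w q)\<^sup>2 * e q * e r) =
    2 * ((\<Sum>q<n. u q * u q * e q) * (\<Sum>r<n. w r * w r * e r) - (\<Sum>q<n. u q * w q * e q)\<^sup>2)"
proof -
  have "(\<Sum>q<n. \<Sum>r<n. (u q * w r - u r * w q)\<^sup>2 * e q * e r) =
    (\<Sum>q<n. \<Sum>r<n. (u q * u q * e q) * (w r * w r * e r) + (w q * w q * e q) * (u r * u r * e r)
       - 2 * ((u q * w q * e q) * (u r * w r * e r)))"
    by (intro sum.cong refl) (simp add: power2_eq_square algebra_simps)
  also have "\<dots> = (\<Sum>q<n. u q * u q * e q) * (\<Sum>r<n. w r * w r * e r) + (\<Sum>q<n. w q * w q * e q) * (\<Sum>r<n. u r * u r * e r)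
       - 2 * ((\<Sum>q<n. u q * w q * e q) * (\<Sum>r<n. u r * w r * e r))"
  proof -
    have "(\<Sum>q<n. \<Sum>r<n. (u q * u q * e q) * (w r * w r * e r) + (w q * w q * e q) * (u r * u r * e r)
       - 2 * ((u q * w q * e q) * (u r * w r * e r))) =
      (\<Sum>q<n. \<Sum>r<n. (u q * u q * e q) * (w r * w r * e r)) + (\<Sum>q<n. \<Sum>r<n. (w q * w q * e q) * (u r * u r * e r))
       - 2 * (\<Sum>q<n. \<Sum>r<n. (u q * w q * e q) * (u r * w r * e r))"
      by (simp add: sum.distrib sum_subtractf sum_distrib_left)
    also have "\<dots> = (\<Sum>q<n. u q * u q * e q) * (\<Sum>r<n. w r * w r * e r) + (\<Sum>q<n. w q * w q * e q) * (\<Sum>r<n. u r * u r * e r)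
       - 2 * ((\<Sum>q<n. u q * w q * e q) * (\<Sum>r<n. u r * w r * e r))"
      by (simp only: sum_product)
    finally show ?thesis .
  qed
  finally show ?thesis by (simp add: power2_eq_square algebra_simps)
qed

lemma poly_rank2_secular_poly:
  assumes x: "\<forall>i<n. x \<noteq> a i"
  shows "poly (rank2_secular_poly n a s t u w) x =
    (\<Prod>i<n. x - a i) * ((1 - s * resolvent_form n a u u x) * (1 - t * resolvent_form n a w w x) - s * t * (resolvent_form n a u w x)\<^sup>2)"
proof -
  define P where "P = poly (node_poly a {..<n}) x"
  define e where "e q = 1 / (x - a q)" for q
  have p1: "poly (node_poly a ({..<n} - {q})) x = P * e q" if "q < n" for q
    using poly_node_poly_remove[of "{..<n}" q x a] x that unfolding P_def e_def by simp
  have p2: "(u q * w r - u r * w q)\<^sup>2 * poly (node_poly a ({..<n} - {q} - {r})) x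
      = (u q * w r - u r * w q)\<^sup>2 * (P * e q * e r)" if "q < n" "r < n" for q r
  proof (cases "q = r")
    case False
    then show ?thesis
      using poly_node_poly_remove[of "{..<n} - {q}" r x a] p1[OF that(1)] x that unfolding e_def by simp
  qed simp
  have s1: "(\<Sum>q<n. (s * (u q)\<^sup>2 + t * (w q)\<^sup>2) * poly (node_poly a ({..<n} - {q})) x) = P * (s * resolvent_form n a u u x + t * resolvent_form n a w w x)"
  proof -
    have "(\<Sum>q<n. (s * (u q)\<^sup>2 + t * (w q)\<^sup>2) * poly (node_poly a ({..<n} - {q})) x) = (\<Sum>q<n. P * (s * (u q * u q * e q) + t * (w q * w q * e q)))"
      by (intro sum.cong refl) (simp add: p1 power2_eq_square algebra_simps)
    also have "\<dots> = P * (s * resolvent_form n a u u x + t * resolvent_form n a w w x)"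
      unfolding resolvent_form_def e_def by (simp add: sum_distrib_left sum.distrib algebra_simps)
    finally show ?thesis .
  qed
  have s2: "(\<Sum>q<n. \<Sum>r<n. (u q * w r - u r * w q)\<^sup>2 * poly (node_poly a ({..<n} - {q} - {r})) x) =
      P * (2 * (resolvent_form n a u u x * resolvent_form n a w w x - (resolvent_form n a u w x)\<^sup>2))"
  proof -
    have "(\<Sum>q<n. \<Sum>r<n. (u q * w r - u r * w q)\<^sup>2 * poly (node_poly a ({..<n} - {q} - {r})) x) =
        (\<Sum>q<n. \<Sum>r<n. P * ((u q * w r - u r * w q)\<^sup>2 * e q * e r))"
    proof (intro sum.cong refl)
      fix q r assume "q \<in> {..<n}" "r \<in> {..<n}"
      then show "(u q * w r - u r * w q)\<^sup>2 * poly (node_poly a ({..<n} - {q} - {r})) x = P * ((u q * w r - u r * w q)\<^sup>2 * e q * e r)"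
        using p2[of q r] by (simp add: algebra_simps)
    qed
    also have "\<dots> = P * (\<Sum>q<n. \<Sum>r<n. (u q * w r - u r * w q)\<^sup>2 * e q * e r)"
      by (simp add: sum_distrib_left)
    also have "\<dots> = P * (2 * (resolvent_form n a u u x * resolvent_form n a w w x - (resolvent_form n a u w x)\<^sup>2))"
      unfolding lagrange_identity_weighted resolvent_form_def e_def by simp
    finally show ?thesis .
  qed
  have "poly (rank2_secular_poly n a s t u w) x = P - (\<Sum>q<n. (s * (u q)\<^sup>2 + t * (w q)\<^sup>2) * poly (node_poly a ({..<n} - {q})) x)
     + s * t / 2 * (\<Sum>q<n. \<Sum>r<n. (u q * w r - u r * w q)\<^sup>2 * poly (node_poly a ({..<n} - {q} - {r})) x)"
    unfolding rank2_secular_poly_def secular_poly_def by (simp add: poly_sum P_def)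
  also have "\<dots> = P * ((1 - s * resolvent_form n a u u x) * (1 - t * resolvent_form n a w w x) - s * t * (resolvent_form n a u w x)\<^sup>2)"
    unfolding s1 s2 by (simp add: algebra_simps)
  finally show ?thesis unfolding P_def poly_node_poly .
qed

lemma char_poly_rank2_mod: "char_poly (rank2_mod n a s t u w) = rank2_secular_poly n a s t u w"
proof -
  define D where "D = char_poly (rank2_mod n a s t u w) - rank2_secular_poly n a s t u w"
  have sub: "- (a ` {..<n}) \<subseteq> {x. poly D x = 0}"
  proof
    fix x assume "x \<in> - (a ` {..<n})"
    then have "\<forall>i<n. x \<noteq> a i" by auto
    then show "x \<in> {x. poly D x = 0}" unfolding D_def using poly_char_poly_rank2_mod poly_rank2_secular_poly by simp
  qed
  have "infinite (- (a ` {..<n}))"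
    using Diff_infinite_finite[of "a ` {..<n}" UNIV] infinite_UNIV_char_0 by (simp add: Compl_eq_Diff_UNIV)
  then have "infinite {x. poly D x = 0}" using sub finite_subset by blast
  then have "D = 0" using poly_roots_finite by blast
  then show ?thesis unfolding D_def by simp
qed


lemma char_poly_rank1_mod:
  "char_poly (rank2_mod n a s 0 u w) = secular_poly a (\<lambda>q. s * (u q)\<^sup>2) {..<n}"
  unfolding char_poly_rank2_mod rank2_secular_poly_def by simp

lemma double_sum_cross:
  fixes X :: "'a \<Rightarrow> 'a \<Rightarrow> real"
  assumes Q: "finite Q" "i \<in> Q"
    and zero: "\<And>q r. q \<in> Q \<Longrightarrow> r \<in> Q \<Longrightarrow> q \<noteq> i \<Longrightarrow> r \<noteq> i \<Longrightarrow> X q r = 0"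
    and diag: "X i i = 0" and sym: "\<And>q. q \<in> Q \<Longrightarrow> X q i = X i q"
  shows "(\<Sum>q\<in>Q. \<Sum>r\<in>Q. X q r) = 2 * (\<Sum>r\<in>Q - {i}. X i r)"
proof -
  have row: "(\<Sum>r\<in>Q. X i r) = (\<Sum>r\<in>Q - {i}. X i r)"
    using sum.remove[OF Q, of "X i"] diag by simp
  have col: "(\<Sum>r\<in>Q. X q r) = X i q" if "q \<in> Q - {i}" for q
  proof -
    have "(\<Sum>r\<in>Q - {i}. X q r) = 0" by (rule sum.neutral) (use that zero in auto)
    then show ?thesis using sum.remove[OF Q, of "X q"] sym that by simp
  qed
  have "(\<Sum>q\<in>Q. \<Sum>r\<in>Q. X q r) = (\<Sum>r\<in>Q. X i r) + (\<Sum>q\<in>Q - {i}. \<Sum>r\<in>Q. X q r)"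
    by (rule sum.remove[OF Q])
  also have "(\<Sum>q\<in>Q - {i}. \<Sum>r\<in>Q. X q r) = (\<Sum>q\<in>Q - {i}. X i q)" by (rule sum.cong[OF refl col])
  finally show ?thesis using row by simp
qed

lemma poly_char_poly_rank2_mod_node:
  assumes inj: "inj_on a {..<n}" and i: "i < n"
  shows "poly (char_poly (rank2_mod n a s t u w)) (a i) = g_plus n a s t u w i * (\<Prod>q\<in>{..<n} - {i}. a i - a q)"
proof -
  define Q where "Q = {..<n}"
  define P where "P = (\<Prod>q\<in>Q - {i}. a i - a q)"
  define k where "k q r = (u q * w r - u r * w q)\<^sup>2" for q r
  define X where "X q r = k q r * poly (node_poly a (Q - {q} - {r})) (a i)" for q r
  have Q: "finite Q" "i \<in> Q" unfolding Q_def using i by auto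
  have vanish: "poly (node_poly a (Q - {q} - {r})) (a i) = 0" if "q \<noteq> i" "r \<noteq> i" for q r
    unfolding poly_node_poly using Q that by (intro prod_zero) auto
  have "(\<Sum>q\<in>Q. \<Sum>r\<in>Q. X q r) = 2 * (\<Sum>r\<in>Q - {i}. X i r)"
  proof (rule double_sum_cross[OF Q])
    fix q assume "q \<in> Q"
    have "Q - {q} - {i} = Q - {i} - {q}" by auto
    moreover have "k q i = k i q" unfolding k_def by (simp add: power2_eq_square algebra_simps)
    ultimately show "X q i = X i q" unfolding X_def by simp
  qed (simp_all add: X_def k_def vanish)
  also have "(\<Sum>r\<in>Q - {i}. X i r) = - P * (\<Sum>q\<in>Q - {i}. (u q * w i - u i * w q)\<^sup>2 / (a q - a i))"
  proof -
    have "X i r = - P * ((u r * w i - u i * w r)\<^sup>2 / (a r - a i))" if r: "r \<in> Q - {i}" for r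
    proof -
      have "a r \<noteq> a i" using inj r Q unfolding Q_def by (auto dest: inj_onD)
      then have ne: "a r - a i \<noteq> 0" by simp
      have P: "P = (a i - a r) * poly (node_poly a (Q - {i} - {r})) (a i)"
        unfolding P_def poly_node_poly by (rule prod.remove) (use Q r in auto)
      have "k i r = (u r * w i - u i * w r)\<^sup>2" unfolding k_def by (simp add: power2_eq_square algebra_simps)
      then show ?thesis unfolding X_def P using ne by (simp add: field_simps)
    qed
    then show ?thesis by (simp add: sum_distrib_left)
  qed
  finally have double: "(\<Sum>q\<in>Q. \<Sum>r\<in>Q. X q r) = - 2 * P * (\<Sum>q\<in>Q - {i}. (u q * w i - u i * w q)\<^sup>2 / (a q - a i))"
    by simp
  have "poly (char_poly (rank2_mod n a s t u w)) (a i) =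
      - (s * (u i)\<^sup>2 + t * (w i)\<^sup>2) * P + s * t / 2 * (\<Sum>q\<in>Q. \<Sum>r\<in>Q. X q r)"
    unfolding char_poly_rank2_mod rank2_secular_poly_def Q_def[symmetric]
    by (simp add: poly_sum poly_secular_poly_node[OF Q] X_def k_def P_def)
  then show ?thesis unfolding double g_plus_def Q_def[symmetric] P_def[symmetric] by (simp add: algebra_simps)
qed

lemma real_symmetric_eigenvalue_real:
  fixes A :: "real mat" and x :: "complex vec"
  assumes A: "A \<in> carrier_mat n n" and AT: "transpose_mat A = A"
    and x: "x \<in> carrier_vec n" "x \<noteq> 0\<^sub>v n" and ev: "map_mat complex_of_real A *\<^sub>v x = z \<cdot>\<^sub>v x"
  shows "z \<in> \<real>"
proof -
  have sym: "A $$ (i,j) = A $$ (j,i)" if "i < n" "j < n" for i j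
    using arg_cong[OF AT, of "\<lambda>M. M $$ (j,i)"] A that by simp
  define N where "N = (\<Sum>i<n. cnj (x $ i) * x $ i)"
  define s where "s = (\<Sum>i<n. \<Sum>j<n. cnj (x $ i) * complex_of_real (A $$ (i,j)) * x $ j)"
  have "z * N = (\<Sum>i<n. cnj (x $ i) * (map_mat complex_of_real A *\<^sub>v x) $ i)"
    unfolding N_def ev using x(1) by (simp add: sum_distrib_left algebra_simps)
  also have "\<dots> = s"
    unfolding s_def using A x(1) by (simp add: scalar_prod_def atLeast0LessThan sum_distrib_left algebra_simps)
  finally have zN: "z * N = s" .
  have "cnj s = (\<Sum>i<n. \<Sum>j<n. x $ i * complex_of_real (A $$ (i,j)) * cnj (x $ j))"
    unfolding s_def by simp
  also have "\<dots> = (\<Sum>j<n. \<Sum>i<n. x $ i * complex_of_real (A $$ (i,j)) * cnj (x $ j))"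
    by (rule sum.swap)
  also have "\<dots> = s" unfolding s_def by (intro sum.cong refl) (simp add: sym algebra_simps)
  finally have "cnj s = s" .
  moreover have "cnj N = N" unfolding N_def by (simp add: mult.commute)
  moreover have "N \<noteq> 0"
  proof
    assume "N = 0"
    moreover have "Re N = (\<Sum>i<n. (Re (x $ i))\<^sup>2 + (Im (x $ i))\<^sup>2)"
      unfolding N_def by (simp add: Re_sum power2_eq_square)
    ultimately have "(\<Sum>i<n. (Re (x $ i))\<^sup>2 + (Im (x $ i))\<^sup>2) = 0" by simp
    then have "\<forall>i<n. x $ i = 0"
      by (subst (asm) sum_nonneg_eq_0_iff) (auto simp: complex_eq_iff add_nonneg_eq_0_iff)
    then have "x = 0\<^sub>v n" using x(1) by (intro eq_vecI) auto
    with x(2) show False by simp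
  qed
  ultimately have "cnj z * N = z * N" using zN by (metis complex_cnj_mult)
  then show ?thesis using \<open>N \<noteq> 0\<close> by (simp add: Reals_cnj_iff)
qed

lemma real_symmetric_eigenvector:
  fixes A :: "real mat"
  assumes A: "A \<in> carrier_mat n n" and n: "0 < n" and AT: "transpose_mat A = A"
  shows "\<exists>r v. v \<in> carrier_vec n \<and> v \<noteq> 0\<^sub>v n \<and> A *\<^sub>v v = r \<cdot>\<^sub>v v"
proof -
  define Ac where "Ac = map_mat complex_of_real A"
  have Ac: "Ac \<in> carrier_mat n n" unfolding Ac_def using A by simp
  have cp: "char_poly Ac = map_poly complex_of_real (char_poly A)"
    unfolding Ac_def by (rule of_real_hom.char_poly_hom[OF A])
  have "degree (char_poly Ac) = n" using degree_monic_char_poly[OF Ac] by simp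
  then have "\<not> constant (poly (char_poly Ac))" using constant_degree[of "char_poly Ac"] n by auto
  then obtain z where z: "poly (char_poly Ac) z = 0" using fundamental_theorem_of_algebra by blast
  then obtain x where "eigenvector Ac x z" using eigenvalue_root_char_poly[OF Ac] unfolding eigenvalue_def by auto
  then have "z \<in> \<real>"
    using real_symmetric_eigenvalue_real[OF A AT] Ac unfolding eigenvector_def Ac_def by blast
  then have "z = complex_of_real (Re z)" by (simp add: complex_is_Real_iff)
  then have "complex_of_real (poly (char_poly A) (Re z)) = poly (char_poly Ac) z"
    unfolding cp by (metis of_real_hom.poly_map_poly)
  then have "eigenvalue A (Re z)" using z eigenvalue_root_char_poly[OF A] by simp
  then show ?thesis unfolding eigenvalue_def eigenvector_def using A by auto
qed

definition householder_mat :: "nat \<Rightarrow> (nat \<Rightarrow> real) \<Rightarrow> real mat" where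
  "householder_mat n w = mat n n (\<lambda>(i,j). (if i = j then 1 else 0) - 2 * w i * w j / (\<Sum>l<n. w l * w l))"

lemma householder_mat_involution:
  assumes c0: "(\<Sum>l<n. w l * w l) \<noteq> 0"
  shows "householder_mat n w * householder_mat n w = 1\<^sub>m n"
proof (rule eq_matI)
  define c where "c = (\<Sum>l<n. w l * w l)"
  fix i j assume "i < dim_row (1\<^sub>m n)" "j < dim_col (1\<^sub>m n)"
  then have i: "i < n" and j: "j < n" by auto
  have delta: "(\<Sum>l<n. (if i = l then 1 else 0) * f l) = f i"
    "(\<Sum>l<n. f l * (if l = j then 1 else 0)) = f j" for f :: "nat \<Rightarrow> real"
    using i j by (simp_all add: if_distrib[of "\<lambda>x. x * _"] if_distrib[of "\<lambda>x. _ * x"] cong: if_cong)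
  have "(householder_mat n w * householder_mat n w) $$ (i,j)
      = (\<Sum>l<n. ((if i = l then 1 else 0) - 2 * w i * w l / c) * ((if l = j then 1 else 0) - 2 * w l * w j / c))"
    using i j unfolding householder_mat_def c_def by (simp add: scalar_prod_def atLeast0LessThan)
  also have "\<dots> = (\<Sum>l<n. (if i = l then 1 else 0) * (if l = j then 1 else 0))
      - (\<Sum>l<n. (if i = l then 1 else 0) * (2 * w l * w j / c))
      - (\<Sum>l<n. (2 * w i * w l / c) * (if l = j then 1 else 0))
      + (\<Sum>l<n. (2 * w i * w l / c) * (2 * w l * w j / c))"
    by (simp add: algebra_simps sum.distrib sum_subtractf)
  also have "(\<Sum>l<n. (2 * w i * w l / c) * (2 * w l * w j / c)) = 4 * w i * w j / (c * c) * c"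
    unfolding c_def by (simp add: sum_distrib_left sum_divide_distrib algebra_simps)
  also have "(\<Sum>l<n. (if i = l then 1 else 0) * (if l = j then 1 else 0)) = (if i = j then 1 else (0::real))"
    by (rule delta(1))
  also have "(\<Sum>l<n. (if i = l then 1 else 0) * (2 * w l * w j / c)) = 2 * w i * w j / c"
    by (rule delta(1))
  also have "(\<Sum>l<n. (2 * w i * w l / c) * (if l = j then 1 else 0)) = 2 * w i * w j / c"
    by (rule delta(2))
  finally show "(householder_mat n w * householder_mat n w) $$ (i,j) = 1\<^sub>m n $$ (i,j)"
    using c0 i j unfolding c_def by simp
qed (simp_all add: householder_mat_def)

lemma householder_reflection:
  fixes v :: "real vec"
  assumes v: "v \<in> carrier_vec N" and N: "0 < N" and unit: "(\<Sum>i<N. (v $ i)\<^sup>2) = 1"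
  shows "\<exists>H. H \<in> carrier_mat N N \<and> transpose_mat H = H \<and> H * H = 1\<^sub>m N \<and> (\<forall>i<N. H $$ (i,0) = v $ i)"
proof -
  have split: "(\<Sum>i<N. f i) = f 0 + (\<Sum>i\<in>{..<N} - {0}. f i)" for f :: "nat \<Rightarrow> real"
    by (rule sum.remove) (use N in auto)
  show ?thesis
  proof (cases "v $ 0 = 1")
    case True
    then have "(\<Sum>i\<in>{..<N} - {0}. (v $ i)\<^sup>2) = 0" using unit split[of "\<lambda>i. (v $ i)\<^sup>2"] by simp
    then have "\<forall>i\<in>{..<N} - {0}. v $ i = 0" by (subst (asm) sum_nonneg_eq_0_iff) auto
    then show ?thesis using True by (intro exI[of _ "1\<^sub>m N"]) (auto simp: less_Suc_eq_0_disj)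
  next
    case False
    define w where "w i = v $ i - (if i = 0 then 1 else 0)" for i
    have "(\<Sum>l\<in>{..<N} - {0}. w l * w l) = (\<Sum>l\<in>{..<N} - {0}. (v $ l)\<^sup>2)"
      by (rule sum.cong) (auto simp: w_def power2_eq_square)
    then have c: "(\<Sum>l<N. w l * w l) = 2 - 2 * v $ 0"
      using split[of "\<lambda>l. w l * w l"] split[of "\<lambda>i. (v $ i)\<^sup>2"] unit
      unfolding w_def by (simp add: power2_eq_square algebra_simps)
    define H where "H = householder_mat N w"
    have "H $$ (i,0) = v $ i" if "i < N" for i
    proof -
      have "H $$ (i,0) = (if i = 0 then 1 else 0) - 2 * w i * w 0 / (2 - 2 * v $ 0)"
        unfolding H_def householder_mat_def c using that N by simp
      also have "2 * w i * w 0 / (2 - 2 * v $ 0) = - w i" using False by (simp add: w_def field_simps)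
      finally show ?thesis unfolding w_def by simp
    qed
    moreover have "H * H = 1\<^sub>m N" unfolding H_def using c False by (intro householder_mat_involution) simp
    moreover have "transpose_mat H = H" unfolding H_def householder_mat_def by (rule eq_matI) (auto simp: mult.commute)
    moreover have "H \<in> carrier_mat N N" unfolding H_def householder_mat_def by simp
    ultimately show ?thesis by blast
  qed
qed

lemma real_symmetric_unit_eigenvector:
  fixes A :: "real mat"
  assumes A: "A \<in> carrier_mat n n" and n: "0 < n" and AT: "transpose_mat A = A"
  shows "\<exists>r v. v \<in> carrier_vec n \<and> (\<Sum>i<n. (v $ i)\<^sup>2) = 1 \<and> A *\<^sub>v v = r \<cdot>\<^sub>v v"
proof -
  obtain r v where v: "v \<in> carrier_vec n" "v \<noteq> 0\<^sub>v n" "A *\<^sub>v v = r \<cdot>\<^sub>v v"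
    using real_symmetric_eigenvector[OF A n AT] by blast
  define S where "S = (\<Sum>i<n. (v $ i)\<^sup>2)"
  obtain i where i: "i < n" "v $ i \<noteq> 0" using v(1,2) by (metis eq_vecI carrier_vecD index_zero_vec)
  have "(v $ i)\<^sup>2 \<le> S" unfolding S_def by (rule member_le_sum) (use i in auto)
  moreover have "0 < (v $ i)\<^sup>2" using i by simp
  ultimately have S: "0 < S" by linarith
  define u where "u = (1 / sqrt S) \<cdot>\<^sub>v v"
  have "(\<Sum>i<n. (u $ i)\<^sup>2) = (\<Sum>i<n. (v $ i)\<^sup>2 / S)"
    by (rule sum.cong) (use v(1) S in \<open>auto simp: u_def power_divide\<close>)
  also have "\<dots> = 1" using S unfolding S_def by (simp add: sum_divide_distrib[symmetric])
  finally have "(\<Sum>i<n. (u $ i)\<^sup>2) = 1" .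
  moreover have "A *\<^sub>v u = r \<cdot>\<^sub>v u"
    unfolding u_def using A v by (simp add: mult_mat_vec smult_smult_assoc mult.commute)
  moreover have "u \<in> carrier_vec n" unfolding u_def using v(1) by simp
  ultimately show ?thesis by blast
qed

lemma four_block_diag_conj:
  fixes C Q X :: "'a::comm_ring_1 mat"
  assumes C: "C \<in> carrier_mat 1 1" and Q: "Q \<in> carrier_mat n n" and X: "X \<in> carrier_mat n n"
  shows "transpose_mat (four_block_mat (1\<^sub>m 1) (0\<^sub>m 1 n) (0\<^sub>m n 1) Q)
      * four_block_mat C (0\<^sub>m 1 n) (0\<^sub>m n 1) X * four_block_mat (1\<^sub>m 1) (0\<^sub>m 1 n) (0\<^sub>m n 1) Q
    = four_block_mat C (0\<^sub>m 1 n) (0\<^sub>m n 1) (transpose_mat Q * X * Q)"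
proof -
  have QT: "transpose_mat Q \<in> carrier_mat n n" using Q by simp
  have "transpose_mat (four_block_mat (1\<^sub>m 1) (0\<^sub>m 1 n) (0\<^sub>m n 1) Q)
      = four_block_mat (1\<^sub>m 1) (0\<^sub>m 1 n) (0\<^sub>m n 1) (transpose_mat Q)"
    using Q by (subst transpose_four_block_mat) auto
  moreover have "four_block_mat (1\<^sub>m 1) (0\<^sub>m 1 n) (0\<^sub>m n 1) (transpose_mat Q) * four_block_mat C (0\<^sub>m 1 n) (0\<^sub>m n 1) X
      = four_block_mat C (0\<^sub>m 1 n) (0\<^sub>m n 1) (transpose_mat Q * X)"
    using mult_four_block_mat[OF one_carrier_mat zero_carrier_mat zero_carrier_mat QT C zero_carrier_mat zero_carrier_mat X]
      C X QT by simp
  moreover have "four_block_mat C (0\<^sub>m 1 n) (0\<^sub>m n 1) (transpose_mat Q * X) * four_block_mat (1\<^sub>m 1) (0\<^sub>m 1 n) (0\<^sub>m n 1) Q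
      = four_block_mat C (0\<^sub>m 1 n) (0\<^sub>m n 1) (transpose_mat Q * X * Q)"
    using mult_four_block_mat[OF C zero_carrier_mat zero_carrier_mat mult_carrier_mat[OF QT X] one_carrier_mat
        zero_carrier_mat zero_carrier_mat Q] C X Q QT by simp
  ultimately show ?thesis by simp
qed

lemma householder_deflation:
  fixes A :: "real mat"
  assumes A: "A \<in> carrier_mat (Suc n) (Suc n)" and AT: "transpose_mat A = A"
  shows "\<exists>H r B. H \<in> carrier_mat (Suc n) (Suc n) \<and> transpose_mat H = H \<and> H * H = 1\<^sub>m (Suc n)
    \<and> B \<in> carrier_mat n n \<and> transpose_mat B = B
    \<and> H * A * H = four_block_mat (mat 1 1 (\<lambda>_. r)) (0\<^sub>m 1 n) (0\<^sub>m n 1) B"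
proof -
  define N where "N = Suc n"
  have A': "A \<in> carrier_mat N N" using A unfolding N_def .
  obtain r v where v: "v \<in> carrier_vec N" "(\<Sum>i<N. (v $ i)\<^sup>2) = 1" "A *\<^sub>v v = r \<cdot>\<^sub>v v"
    using real_symmetric_unit_eigenvector[OF A' _ AT] unfolding N_def by auto
  obtain H where H: "H \<in> carrier_mat N N" "transpose_mat H = H" "H * H = 1\<^sub>m N" "\<forall>i<N. H $$ (i,0) = v $ i"
    using householder_reflection[OF v(1) _ v(2)] unfolding N_def by auto
  have Hcol: "col H 0 = v" using H(1,4) v(1) unfolding N_def by (intro eq_vecI) auto
  define M where "M = H * A * H"
  have M: "M \<in> carrier_mat N N" unfolding M_def using H A' by auto
  have "transpose_mat M = transpose_mat H * transpose_mat (H * A)"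
    unfolding M_def by (rule transpose_mult) (use H A' in auto)
  also have "transpose_mat (H * A) = transpose_mat A * transpose_mat H"
    by (rule transpose_mult) (use H A' in auto)
  finally have "transpose_mat M = H * (A * H)" using H AT by simp
  also have "\<dots> = M" unfolding M_def by (rule assoc_mult_mat[symmetric]) (use H A' in auto)
  finally have MT: "transpose_mat M = M" .
  have Msym: "M $$ (i,j) = M $$ (j,i)" if "i < N" "j < N" for i j
    using arg_cong[OF MT, of "\<lambda>X. X $$ (j,i)"] M that by simp
  have Mcol: "M $$ (i,0) = (if i = 0 then r else 0)" if i: "i < N" for i
  proof -
    have "M = H * (A * H)" unfolding M_def by (rule assoc_mult_mat) (use H A' in auto)
    then have "M $$ (i,0) = row H i \<bullet> col (A * H) 0" using H A' i unfolding N_def by simp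
    also have "col (A * H) 0 = A *\<^sub>v col H 0" by (rule col_mult2) (use H A' in \<open>auto simp: N_def\<close>)
    also have "row H i \<bullet> (A *\<^sub>v col H 0) = r * (row H i \<bullet> col H 0)" unfolding Hcol v(3) using H v(1) i by simp
    also have "row H i \<bullet> col H 0 = (H * H) $$ (i,0)" using H(1) i unfolding N_def by simp
    finally show ?thesis using H(3) i unfolding N_def by simp
  qed
  define B where "B = mat n n (\<lambda>(i,j). M $$ (Suc i, Suc j))"
  have B: "B \<in> carrier_mat n n" unfolding B_def by simp
  have BT: "transpose_mat B = B" unfolding B_def using Msym by (intro eq_matI) (auto simp: N_def)
  have "M = four_block_mat (mat 1 1 (\<lambda>_. r)) (0\<^sub>m 1 n) (0\<^sub>m n 1) B"
  proof (rule eq_matI)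
    fix i j assume "i < dim_row (four_block_mat (mat 1 1 (\<lambda>_. r)) (0\<^sub>m 1 n) (0\<^sub>m n 1) B)"
       "j < dim_col (four_block_mat (mat 1 1 (\<lambda>_. r)) (0\<^sub>m 1 n) (0\<^sub>m n 1) B)"
    then have ij: "i < N" "j < N" using B unfolding N_def by auto
    show "M $$ (i,j) = four_block_mat (mat 1 1 (\<lambda>_. r)) (0\<^sub>m 1 n) (0\<^sub>m n 1) B $$ (i,j)"
    proof (cases "i = 0 \<or> j = 0")
      case True
      then show ?thesis using Mcol[OF ij(1)] Mcol[OF ij(2)] Msym[OF ij] ij B unfolding N_def by auto
    next
      case False
      then obtain i' j' where "i = Suc i'" "j = Suc j'" by (metis not0_implies_Suc)
      then show ?thesis using ij B unfolding B_def N_def by auto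
    qed
  qed (use M B in \<open>auto simp: N_def\<close>)
  then show ?thesis using H B BT unfolding M_def N_def by blast
qed

theorem real_symmetric_diagonalization:
  fixes A :: "real mat"
  assumes "A \<in> carrier_mat n n" "transpose_mat A = A"
  shows "\<exists>Q \<mu>. Q \<in> carrier_mat n n \<and> transpose_mat Q * Q = 1\<^sub>m n \<and> transpose_mat Q * A * Q = mat_diag n \<mu>"
  using assms
proof (induction n arbitrary: A)
  case 0
  then show ?case by (intro exI[of _ "1\<^sub>m 0"] exI[of _ "\<lambda>_. 0"]) (auto intro!: eq_matI simp: mat_diag_def)
next
  case (Suc n A)
  obtain H r B where H: "H \<in> carrier_mat (Suc n) (Suc n)" "transpose_mat H = H" "H * H = 1\<^sub>m (Suc n)"
    and B: "B \<in> carrier_mat n n" "transpose_mat B = B"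
    and HAH: "H * A * H = four_block_mat (mat 1 1 (\<lambda>_. r)) (0\<^sub>m 1 n) (0\<^sub>m n 1) B"
    using householder_deflation[OF Suc.prems] by blast
  obtain Q' \<mu>' where Q': "Q' \<in> carrier_mat n n" "transpose_mat Q' * Q' = 1\<^sub>m n"
    "transpose_mat Q' * B * Q' = mat_diag n \<mu>'"
    using Suc.IH[OF B] by blast
  define P where "P = four_block_mat (1\<^sub>m 1) (0\<^sub>m 1 n) (0\<^sub>m n 1) Q'"
  have P: "P \<in> carrier_mat (Suc n) (Suc n)" unfolding P_def using Q' by auto
  have conj: "transpose_mat (H * P) * X * (H * P) = transpose_mat P * (H * X * H) * P"
    if X: "X \<in> carrier_mat (Suc n) (Suc n)" for X
  proof -
    have "transpose_mat (H * P) = transpose_mat P * H" using transpose_mult[OF H(1) P] H(2) by simp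
    then show ?thesis using H(1) P X by (simp add: assoc_mult_mat[of _ "Suc n" "Suc n" _ "Suc n" _ "Suc n"])
  qed
  have one: "1\<^sub>m (Suc n) = four_block_mat (1\<^sub>m 1) (0\<^sub>m 1 n) (0\<^sub>m n 1) (1\<^sub>m n)" by simp
  have "H * 1\<^sub>m (Suc n) * H = 1\<^sub>m (Suc n)" using H(1,3) by simp
  then have "transpose_mat (H * P) * (H * P) = transpose_mat P * 1\<^sub>m (Suc n) * P"
    using conj[OF one_carrier_mat] H(1) P by simp
  also have "\<dots> = four_block_mat (1\<^sub>m 1) (0\<^sub>m 1 n) (0\<^sub>m n 1) (transpose_mat Q' * 1\<^sub>m n * Q')"
    unfolding P_def one by (rule four_block_diag_conj) (use Q' in auto)
  also have "\<dots> = 1\<^sub>m (Suc n)" using Q' by simp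
  finally have orth: "transpose_mat (H * P) * (H * P) = 1\<^sub>m (Suc n)" .
  have "transpose_mat (H * P) * A * (H * P) = transpose_mat P * (H * A * H) * P"
    by (rule conj[OF Suc.prems(1)])
  also have "\<dots> = four_block_mat (mat 1 1 (\<lambda>_. r)) (0\<^sub>m 1 n) (0\<^sub>m n 1) (transpose_mat Q' * B * Q')"
    unfolding HAH P_def by (rule four_block_diag_conj) (use Q' B in auto)
  also have "\<dots> = mat_diag (Suc n) (\<lambda>i. if i = 0 then r else \<mu>' (i - 1))"
    unfolding Q'(3) by (rule eq_matI) (auto simp: mat_diag_def)
  finally have "transpose_mat (H * P) * A * (H * P) = mat_diag (Suc n) (\<lambda>i. if i = 0 then r else \<mu>' (i - 1))" .
  moreover have "H * P \<in> carrier_mat (Suc n) (Suc n)" using H(1) P by simp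
  ultimately show ?case using orth by blast
qed

lemma index_transpose_mult_mult:
  fixes Q X :: "real mat"
  assumes Q: "Q \<in> carrier_mat n n" and X: "X \<in> carrier_mat n n" and ij: "i < n" "j < n"
  shows "(transpose_mat Q * X * Q) $$ (i,j) = (\<Sum>l<n. (\<Sum>k<n. Q $$ (k,i) * X $$ (k,l)) * Q $$ (l,j))"
proof -
  have "(transpose_mat Q * X * Q) $$ (i,j) = (\<Sum>k<n. Q $$ (k,i) * (\<Sum>l<n. X $$ (k,l) * Q $$ (l,j)))"
    using assms by (simp add: scalar_prod_def atLeast0LessThan)
  also have "\<dots> = (\<Sum>k<n. \<Sum>l<n. Q $$ (k,i) * X $$ (k,l) * Q $$ (l,j))"
    by (simp add: sum_distrib_left mult.assoc)
  also have "\<dots> = (\<Sum>l<n. \<Sum>k<n. Q $$ (k,i) * X $$ (k,l) * Q $$ (l,j))" by (rule sum.swap)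
  also have "\<dots> = (\<Sum>l<n. (\<Sum>k<n. Q $$ (k,i) * X $$ (k,l)) * Q $$ (l,j))" by (simp add: sum_distrib_right)
  finally show ?thesis .
qed

lemma char_poly_orthogonal_conj:
  fixes Q X :: "real mat"
  assumes Q: "Q \<in> carrier_mat n n" "transpose_mat Q * Q = 1\<^sub>m n" and X: "X \<in> carrier_mat n n"
  shows "char_poly (transpose_mat Q * X * Q) = char_poly X"
proof -
  have QT: "transpose_mat Q \<in> carrier_mat n n" using Q by simp
  have QQT: "Q * transpose_mat Q = 1\<^sub>m n" by (rule mat_mult_left_right_inverse[OF QT Q(1) Q(2)])
  have "Q * (transpose_mat Q * X * Q) * transpose_mat Q = (Q * transpose_mat Q) * X * (Q * transpose_mat Q)"
    using Q(1) QT X by (simp add: assoc_mult_mat[of _ n n _ n _ n])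
  then have "X = Q * (transpose_mat Q * X * Q) * transpose_mat Q" using QQT X by simp
  then have "similar_mat_wit X (transpose_mat Q * X * Q) Q (transpose_mat Q)"
    unfolding similar_mat_wit_def Let_def using Q QT QQT X by auto
  then have "similar_mat X (transpose_mat Q * X * Q)" unfolding similar_mat_def by blast
  then show ?thesis by (simp add: char_poly_similar)
qed

lemma char_poly_symmetric_rank1_update:
  fixes A :: "real mat"
  assumes A: "A \<in> carrier_mat n n" and AT: "transpose_mat A = A"
  shows "\<exists>\<mu> y. char_poly A = node_poly \<mu> {..<n} \<and>
    char_poly (mat n n (\<lambda>(i,j). A $$ (i,j) + \<beta> * v i * v j)) = secular_poly \<mu> (\<lambda>q. \<beta> * (y q)\<^sup>2) {..<n}"
proof -
  obtain Q \<mu> where Q: "Q \<in> carrier_mat n n" "transpose_mat Q * Q = 1\<^sub>m n"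
    and D: "transpose_mat Q * A * Q = mat_diag n \<mu>"
    using real_symmetric_diagonalization[OF A AT] by blast
  define A' where "A' = mat n n (\<lambda>(i,j). A $$ (i,j) + \<beta> * v i * v j)"
  have A'c: "A' \<in> carrier_mat n n" unfolding A'_def by simp
  define y where "y i = (\<Sum>k<n. Q $$ (k,i) * v k)" for i
  have "char_poly A = char_poly (transpose_mat Q * A * Q)" using char_poly_orthogonal_conj[OF Q A] by simp
  also have "transpose_mat Q * A * Q = rank2_mod n \<mu> 0 0 y y"
    unfolding D rank2_mod_def by (rule eq_matI) (auto simp: mat_diag_def)
  also have "char_poly (rank2_mod n \<mu> 0 0 y y) = node_poly \<mu> {..<n}"
    unfolding char_poly_rank1_mod by (simp add: secular_poly_def)
  finally have 1: "char_poly A = node_poly \<mu> {..<n}" .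
  have "transpose_mat Q * A' * Q = rank2_mod n \<mu> \<beta> 0 y y"
  proof (rule eq_matI)
    fix i j assume "i < dim_row (rank2_mod n \<mu> \<beta> 0 y y)" "j < dim_col (rank2_mod n \<mu> \<beta> 0 y y)"
    then have ij: "i < n" "j < n" unfolding rank2_mod_def by auto
    have "(transpose_mat Q * A' * Q) $$ (i,j) = (\<Sum>l<n. (\<Sum>k<n. Q $$ (k,i) * A' $$ (k,l)) * Q $$ (l,j))"
      by (rule index_transpose_mult_mult[OF Q(1) A'c ij])
    also have "\<dots> = (\<Sum>l<n. (\<Sum>k<n. Q $$ (k,i) * A $$ (k,l)) * Q $$ (l,j)) + \<beta> * (y i * y j)"
    proof -
      have "(\<Sum>l<n. (\<Sum>k<n. Q $$ (k,i) * A' $$ (k,l)) * Q $$ (l,j)) =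
          (\<Sum>l<n. (\<Sum>k<n. Q $$ (k,i) * A $$ (k,l)) * Q $$ (l,j) + \<beta> * ((\<Sum>k<n. Q $$ (k,i) * v k) * (v l * Q $$ (l,j))))"
        by (rule sum.cong) (auto simp: A'_def sum.distrib sum_distrib_left sum_distrib_right algebra_simps)
      also have "\<dots> = (\<Sum>l<n. (\<Sum>k<n. Q $$ (k,i) * A $$ (k,l)) * Q $$ (l,j)) + \<beta> * (y i * (\<Sum>l<n. v l * Q $$ (l,j)))"
        unfolding y_def by (simp add: sum.distrib sum_distrib_left)
      also have "(\<Sum>l<n. v l * Q $$ (l,j)) = y j" unfolding y_def by (simp add: mult.commute)
      finally show ?thesis .
    qed
    also have "(\<Sum>l<n. (\<Sum>k<n. Q $$ (k,i) * A $$ (k,l)) * Q $$ (l,j)) = (transpose_mat Q * A * Q) $$ (i,j)"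
      by (rule index_transpose_mult_mult[OF Q(1) A ij, symmetric])
    also have "\<dots> = (if i = j then \<mu> i else 0)" unfolding D using ij by (simp add: mat_diag_def)
    finally show "(transpose_mat Q * A' * Q) $$ (i,j) = rank2_mod n \<mu> \<beta> 0 y y $$ (i,j)"
      unfolding rank2_mod_def using ij by simp
  qed (use Q A'c in \<open>auto simp: rank2_mod_def\<close>)
  then have "char_poly A' = char_poly (rank2_mod n \<mu> \<beta> 0 y y)" using char_poly_orthogonal_conj[OF Q A'c] by simp
  also have "\<dots> = secular_poly \<mu> (\<lambda>q. \<beta> * (y q)\<^sup>2) {..<n}" by (rule char_poly_rank1_mod)
  finally show ?thesis using 1 unfolding A'_def by blast
qed

lemma secular_poly_squares_count_shift:
  assumes "finite S"
  shows "\<exists>l h. l + h = 1 \<and> count_shift l h (secular_poly a (\<lambda>q. \<beta> * (y q)\<^sup>2) S) (node_poly a S)"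
proof (cases "0 \<le> \<beta>")
  case True
  have "count_shift 1 0 (secular_poly a (\<lambda>q. \<beta> * (y q)\<^sup>2) S) (node_poly a S)"
    by (rule secular_poly_count_shift_nonneg[OF assms]) (use True in simp)
  then show ?thesis by (intro exI[of _ 1] exI[of _ 0]) simp
next
  case False
  have "count_shift 0 1 (secular_poly a (\<lambda>q. \<beta> * (y q)\<^sup>2) S) (node_poly a S)"
    by (rule secular_poly_count_shift_nonpos[OF assms]) (use False in \<open>simp add: mult_nonpos_nonneg\<close>)
  then show ?thesis by (intro exI[of _ 0] exI[of _ 1]) simp
qed

lemma char_poly_rank2_mod_nonzero: "char_poly (rank2_mod m d s t u w) \<noteq> 0"
proof -
  have "rank2_mod m d s t u w \<in> carrier_mat m m" unfolding rank2_mod_def by simp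
  from degree_monic_char_poly[OF this] show ?thesis by auto
qed

lemma rank2_mod_count_shift:
  "\<exists>l h. l + h = 2 \<and> count_shift l h (char_poly (rank2_mod m d s t u w)) (node_poly d {..<m})"
proof -
  define M1 where "M1 = rank2_mod m d s 0 u w"
  have M1: "M1 \<in> carrier_mat m m" "transpose_mat M1 = M1"
    unfolding M1_def rank2_mod_def by (auto intro!: eq_matI)
  have M: "rank2_mod m d s t u w = mat m m (\<lambda>(i,j). M1 $$ (i,j) + t * w i * w j)"
    unfolding M1_def rank2_mod_def by (rule eq_matI) auto
  obtain \<mu> y where \<mu>: "char_poly M1 = node_poly \<mu> {..<m}"
    "char_poly (rank2_mod m d s t u w) = secular_poly \<mu> (\<lambda>q. t * (y q)\<^sup>2) {..<m}"
    using char_poly_symmetric_rank1_update[OF M1, of t w] unfolding M by blast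
  obtain l1 h1 where 1: "l1 + h1 = 1" "count_shift l1 h1 (char_poly M1) (node_poly d {..<m})"
    using secular_poly_squares_count_shift[of "{..<m}" d s u]
    unfolding M1_def char_poly_rank1_mod by blast
  obtain l2 h2 where 2: "l2 + h2 = 1" "count_shift l2 h2 (char_poly (rank2_mod m d s t u w)) (char_poly M1)"
    using secular_poly_squares_count_shift[of "{..<m}" \<mu> t y] unfolding \<mu> by blast
  show ?thesis using count_shift_trans[OF 2(2) 1(2)] 1(1) 2(1) by (intro exI[of _ "l2 + l1"] exI[of _ "h2 + h1"]) simp
qed

lemma root_count_node_poly_below:
  assumes mono: "\<And>p q. p < q \<Longrightarrow> q < m \<Longrightarrow> d p < d q" and "i < m"
  shows "root_count (node_poly d {..<m}) {..<d i} = i" "root_count (node_poly d {..<m}) {..d i} = Suc i"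
proof -
  have "d q < d i \<longleftrightarrow> q < i" "d q \<le> d i \<longleftrightarrow> q \<le> i" if "q < m" for q
    using mono[of q i] mono[of i q] that assms(2) by (cases q i rule: linorder_cases; simp)+
  then have "{q \<in> {..<m}. d q \<in> {..<d i}} = {..<i}" "{q \<in> {..<m}. d q \<in> {..d i}} = {..i}"
    using assms(2) by auto
  then show "root_count (node_poly d {..<m}) {..<d i} = i" "root_count (node_poly d {..<m}) {..d i} = Suc i"
    by (simp_all add: root_count_node_poly)
qed

lemma root_count_between_nodes:
  assumes shift: "count_shift l h F (node_poly d {..<m})" and "F \<noteq> 0"
    and mono: "\<And>p q. p < q \<Longrightarrow> q < m \<Longrightarrow> d p < d q"
    and nonroot: "\<And>i. i < m \<Longrightarrow> poly F (d i) \<noteq> 0"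
    and "j + k < m" "0 < k"
  shows "k + 1 \<le> root_count F {d j<..<d (j + k)} + (l + h)"
    and "root_count F {d j<..<d (j + k)} + 1 \<le> k + (l + h)"
proof -
  have closed: "root_count F {..d i} = root_count F {..<d i}" if "i < m" for i
  proof -
    have "{x. poly F x = 0 \<and> x \<in> {..d i}} = {x. poly F x = 0 \<and> x \<in> {..<d i}}"
      using nonroot[OF that] by (auto simp: le_less)
    then show ?thesis unfolding root_count_def by simp
  qed
  have bounds: "Suc i \<le> root_count F {..<d i} + l" "root_count F {..<d i} \<le> i + h" if "i < m" for i
    using shift down_closed_atMost[of "d i"] down_closed_lessThan[of "d i"]
      root_count_node_poly_below[where d = d, OF mono that] closed[OF that] unfolding count_shift_def by fastforce+
  have "d j < d (j + k)" using mono assms(5,6) by simp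
  then have "{..<d (j + k)} = {..d j} \<union> {d j<..<d (j + k)}" by auto
  moreover have "{..d j} \<inter> {d j<..<d (j + k)} = {}" by auto
  ultimately have "root_count F {..<d (j + k)} = root_count F {..d j} + root_count F {d j<..<d (j + k)}"
    using root_count_union[OF assms(2)] by metis
  then show "k + 1 \<le> root_count F {d j<..<d (j + k)} + (l + h)"
    and "root_count F {d j<..<d (j + k)} + 1 \<le> k + (l + h)"
    using bounds[of j] bounds[of "j + k"] closed[of j] assms(5) by linarith+
qed

lemma rank2_mod_root_count_between_nodes:
  assumes mono: "\<And>p q. p < q \<Longrightarrow> q < m \<Longrightarrow> d p < d q"
    and nonroot: "\<And>i. i < m \<Longrightarrow> poly (char_poly (rank2_mod m d s t u w)) (d i) \<noteq> 0"
    and "j + k < m" "0 < k"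
  shows "k - 1 \<le> root_count (char_poly (rank2_mod m d s t u w)) {d j<..<d (j + k)}"
    and "root_count (char_poly (rank2_mod m d s t u w)) {d j<..<d (j + k)} \<le> k + 1"
proof -
  obtain l h where "l + h = 2" "count_shift l h (char_poly (rank2_mod m d s t u w)) (node_poly d {..<m})"
    using rank2_mod_count_shift by blast
  then show "k - 1 \<le> root_count (char_poly (rank2_mod m d s t u w)) {d j<..<d (j + k)}"
    and "root_count (char_poly (rank2_mod m d s t u w)) {d j<..<d (j + k)} \<le> k + 1"
    using root_count_between_nodes[OF _ char_poly_rank2_mod_nonzero mono nonroot assms(3,4)] by fastforce+
qed

lemma node_product_sign:
  fixes d :: "nat \<Rightarrow> real"
  assumes mono: "\<And>p q. p < q \<Longrightarrow> q < m \<Longrightarrow> d p < d q" and "i < m"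
  shows "0 < (-1) ^ (m - 1 - i) * (\<Prod>q\<in>{..<m} - {i}. d i - d q)"
proof -
  have cmp: "(d i - d q < 0 \<longleftrightarrow> i < q) \<and> d i - d q \<noteq> 0" if q: "q \<in> {..<m} - {i}" for q
  proof (cases "q < i")
    case True
    then have "d q < d i" using mono assms(2) by blast
    then show ?thesis using True by simp
  next
    case False
    then have "i < q" using q by auto
    then have "d i < d q" using mono q by blast
    then show ?thesis using \<open>i < q\<close> by simp
  qed
  then have "\<forall>q\<in>{..<m} - {i}. d i - d q \<noteq> 0" by blast
  moreover have "{q \<in> {..<m} - {i}. d i - d q < 0} = {i<..<m}" using cmp assms(2) by auto
  ultimately show ?thesis using prod_sign_count[of "{..<m} - {i}" "\<lambda>q. d i - d q"] by simp
qed

lemma rank2_mod_root_count_parity: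
  assumes mono: "\<And>p q. p < q \<Longrightarrow> q < m \<Longrightarrow> d p < d q" and "j + k < m" "0 < k"
    and nonroot: "\<And>i. i < m \<Longrightarrow> poly (char_poly (rank2_mod m d s t u w)) (d i) \<noteq> 0"
  shows "even (root_count (char_poly (rank2_mod m d s t u w)) {d j<..<d (j + k)}) \<longleftrightarrow>
    (even k \<longleftrightarrow> 0 < g_plus m d s t u w j * g_plus m d s t u w (j + k))"
proof -
  define p where "p = char_poly (rank2_mod m d s t u w)"
  define G where "G = g_plus m d s t u w j * g_plus m d s t u w (j + k)"
  define P where "P i = (\<Prod>q\<in>{..<m} - {i}. d i - d q)" for i
  define \<sigma> :: real where "\<sigma> = (-1) ^ k"
  have inj: "inj_on d {..<m}" by (rule inj_onI) (metis lessThan_iff linorder_neqE_nat mono order_less_irrefl)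
  have "d j < d (j + k)" using mono assms(2,3) by simp
  then have "even (root_count p {d j<..<d (j + k)}) \<longleftrightarrow> 0 < poly p (d j) * poly p (d (j + k))"
    using root_count_parity[OF char_poly_rank2_mod_nonzero] nonroot assms(2) unfolding p_def by simp
  also have "poly p (d j) * poly p (d (j + k)) = G * (P j * P (j + k))"
    using poly_char_poly_rank2_mod_node[OF inj] assms(2) unfolding p_def G_def P_def by simp
  also have "\<dots> = (\<sigma> * G) * (\<sigma> * (P j * P (j + k)))"
  proof -
    have "\<sigma> * \<sigma> = 1" unfolding \<sigma>_def by (simp add: power_mult_distrib[symmetric])
    then show ?thesis by (metis mult.assoc mult.commute mult_1)
  qed
  also have "0 < \<dots> \<longleftrightarrow> 0 < \<sigma> * G"
  proof -
    have "0 < (-1) ^ (m - 1 - (j + k)) * P (j + k)" "0 < (-1) ^ (m - 1 - j) * P j"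
      using node_product_sign[of m d, OF mono] assms(2) unfolding P_def by simp_all
    then have "0 < ((-1) ^ (m - 1 - (j + k)) * P (j + k)) * ((-1) ^ (m - 1 - j) * P j)"
      by (rule mult_pos_pos)
    moreover have "(-1::real) ^ (m - 1 - j) = (-1) ^ (m - 1 - (j + k)) * \<sigma>"
      using assms(2) unfolding \<sigma>_def by (simp add: power_add[symmetric])
    moreover have "(-1::real) ^ (m - 1 - (j + k)) * (-1) ^ (m - 1 - (j + k)) = 1"
      by (simp add: power_mult_distrib[symmetric])
    ultimately have "0 < \<sigma> * (P j * P (j + k))" by (simp add: algebra_simps)
    moreover have "0 < Y \<Longrightarrow> 0 < X * Y \<longleftrightarrow> 0 < X" for X Y :: real by (simp add: zero_less_mult_iff)
    ultimately show ?thesis by blast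
  qed
  also have "\<dots> \<longleftrightarrow> (even k \<longleftrightarrow> 0 < G)"
  proof -
    have "poly p (d j) \<noteq> 0" "poly p (d (j + k)) \<noteq> 0" using nonroot assms(2) unfolding p_def by simp_all
    then have "G \<noteq> 0"
      using poly_char_poly_rank2_mod_node[OF inj, of j] poly_char_poly_rank2_mod_node[OF inj, of "j + k"] assms(2)
      unfolding p_def G_def by auto
    then show ?thesis unfolding \<sigma>_def by (auto simp: minus_one_power_iff)
  qed
  finally show ?thesis unfolding p_def G_def .
qed

lemma eig_count_I_int:
  assumes "\<And>i. j < i \<Longrightarrow> i < j + k \<Longrightarrow> poly (char_poly M) (d i) \<noteq> 0"
  shows "eig_count M (I_int d j k) = root_count (char_poly M) {d j<..<d (j + k)}"
proof -
  have "{x \<in> I_int d j k. poly (char_poly M) x = 0} = {x. poly (char_poly M) x = 0 \<and> x \<in> {d j<..<d (j + k)}}"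
    using assms unfolding I_int_def by auto
  then show ?thesis unfolding eig_count_def root_count_def by simp
qed

theorem lemma2:
  fixes m :: nat and d v1 v2 :: "nat \<Rightarrow> real" and \<beta>1 \<beta>2 :: real
    and J1 J2 J3 :: "nat set" and j k :: nat
  assumes "m \<ge> 2"
    and "\<And>p q. p < q \<Longrightarrow> q < m \<Longrightarrow> d p < d q"
    and "\<beta>1 \<noteq> 0" and "\<beta>2 \<noteq> 0"
    and "J1 \<union> J2 \<union> J3 = {..<m}"
    and "J1 \<inter> J2 = {}" and "J1 \<inter> J3 = {}" and "J2 \<inter> J3 = {}"
    and "\<And>q. q \<in> J3 \<Longrightarrow> v1 q = 0"
    and "\<And>q. q \<in> J1 \<Longrightarrow> v2 q = 0"
    and "\<And>i. i < m \<Longrightarrow> \<not> eigenvalue (rank2_mod m d \<beta>1 \<beta>2 v1 v2) (d i)"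
    and "j + 1 < m"
    and "1 \<le> k" and "j + k < m"
  shows "(g_plus m d \<beta>1 \<beta>2 v1 v2 j * g_minus m d \<beta>1 \<beta>2 v1 v2 (j + k) < 0 \<longrightarrow>
            eig_count (rank2_mod m d \<beta>1 \<beta>2 v1 v2) (I_int d j k) = k)
       \<and> (g_plus m d \<beta>1 \<beta>2 v1 v2 j * g_minus m d \<beta>1 \<beta>2 v1 v2 (j + k) > 0 \<longrightarrow>
            eig_count (rank2_mod m d \<beta>1 \<beta>2 v1 v2) (I_int d j k) \<in> {k - 1, k + 1})"
proof -
  define M where "M = rank2_mod m d \<beta>1 \<beta>2 v1 v2"
  define C where "C = eig_count M (I_int d j k)"
  define G where "G = g_plus m d \<beta>1 \<beta>2 v1 v2 j * g_plus m d \<beta>1 \<beta>2 v1 v2 (j + k)"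
  have nonroot: "poly (char_poly M) (d i) \<noteq> 0" if "i < m" for i
    using assms(11)[OF that] eigenvalue_root_char_poly[of M m] unfolding M_def rank2_mod_def by simp
  have k: "0 < k" using assms(13) by simp
  have C: "C = root_count (char_poly M) {d j<..<d (j + k)}"
    unfolding C_def using eig_count_I_int nonroot assms(14) by simp
  have bounds: "k - 1 \<le> C" "C \<le> k + 1"
    using rank2_mod_root_count_between_nodes[where d = d and s = \<beta>1 and t = \<beta>2 and u = v1 and w = v2, OF assms(2) _ assms(14) k]
      nonroot unfolding C M_def by blast+
  have parity: "even C \<longleftrightarrow> (even k \<longleftrightarrow> 0 < G)"
    using rank2_mod_root_count_parity[where d = d and s = \<beta>1 and t = \<beta>2 and u = v1 and w = v2, OF assms(2,14) k] nonroot
    unfolding C G_def M_def by simp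
  have gm: "g_plus m d \<beta>1 \<beta>2 v1 v2 j * g_minus m d \<beta>1 \<beta>2 v1 v2 (j + k) = - G"
    unfolding G_def g_minus_def by simp
  show ?thesis
  proof (intro conjI impI)
    assume "g_plus m d \<beta>1 \<beta>2 v1 v2 j * g_minus m d \<beta>1 \<beta>2 v1 v2 (j + k) < 0"
    then have "even C \<longleftrightarrow> even k" using gm parity by simp
    then have "C = k" using bounds by presburger
    then show "eig_count (rank2_mod m d \<beta>1 \<beta>2 v1 v2) (I_int d j k) = k" unfolding C_def M_def .
  next
    assume "g_plus m d \<beta>1 \<beta>2 v1 v2 j * g_minus m d \<beta>1 \<beta>2 v1 v2 (j + k) > 0"
    then have "even C \<longleftrightarrow> odd k" using gm parity by simp
    then have "C = k - 1 \<or> C = k + 1" using bounds by presburger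
    then have "C \<in> {k - 1, k + 1}" by blast
    then show "eig_count (rank2_mod m d \<beta>1 \<beta>2 v1 v2) (I_int d j k) \<in> {k - 1, k + 1}" unfolding C_def M_def .
  qed
qed

end
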